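(* Let $G$ be a $k$-fold $\mathcal{R}_1$-circuit ($k\ge1$) with principal partition $\mathcal{A}$, let $x,y$ be two technicolour vertices of $G$, and let $G*v$ be the cone of $G$ over a new vertex $v$. Then $vx$ and $vy$ belong to different parts of the principal partition of $G*v$ in $\mathcal{R}_2$.
   Context: For a graph $G=(V,E)$ and a generic $p:V\to\mathbb{R}^d$ (coordinates algebraically independent over $\mathbb{Q}$), the rigidity matrix has a row for each $uv\in E$ with $p(u)-p(v)$ in the $d$ columns of $u$, $p(v)-p(u)$ in those of $v$, zeros elsewhere; $\mathcal{R}_d$ is its row matroid, with rank $r_d$ ($\mathcal{R}_1$ is the graphic matroid). A set of edges is cyclic if it is a union of $\mathcal{R}_d$-circuits; $(V,D)$ is a $k$-fold $\mathcal{R}_d$-circuit if $D$ is cyclic and $r_d(D)=|D|-k$. Its principal partition is the partition $\{A_1,\dots,A_\ell\}$ of $D$ such that $\{D\setminus A_i\}$ is exactly the set of $(k-1)$-fold $\mathcal{R}_d$-circuits contained in $D$. A vertex is technicolour if it is incident with edges from at least two parts of the principal partition. The cone $G*v$ is obtained by adding a new vertex $v$ adjacent to every vertex of $G$; it is a $k$-fold $\mathcal{R}_2$-circuit. *)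

theory Defs
  imports Complex_Main
begin

text \<open>Graphs are given by a finite set of edges, each edge a 2-element set of vertices.
  A placement is p :: 'a => nat => real (p u i is the i-th coordinate of vertex u).\<close>

text \<open>A polynomial is a finitely supported coefficient map from exponent vectors to Q.\<close>
definition alg_indep_Q :: "'b set \<Rightarrow> ('b \<Rightarrow> real) \<Rightarrow> bool" where
  "alg_indep_Q I x \<longleftrightarrow>
     (\<forall>c :: ('b \<Rightarrow> nat) \<Rightarrow> real.
        finite {m. c m \<noteq> 0} \<and> (\<forall>m. c m \<in> \<rat>) \<and>
        (\<forall>m. c m \<noteq> 0 \<longrightarrow> (\<forall>j. j \<notin> I \<longrightarrow> m j = 0)) \<and>
        (\<Sum>m\<in>{m. c m \<noteq> 0}. c m * (\<Prod>j\<in>I. x j ^ m j)) = 0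
        \<longrightarrow> (\<forall>m. c m = 0))"

definition generic :: "nat \<Rightarrow> 'a set \<Rightarrow> ('a \<Rightarrow> nat \<Rightarrow> real) \<Rightarrow> bool" where
  "generic d V p \<longleftrightarrow> alg_indep_Q (V \<times> {..<d}) (\<lambda>(u, i). p u i)"

definition rig_row :: "('a \<Rightarrow> nat \<Rightarrow> real) \<Rightarrow> 'a set \<Rightarrow> 'a \<Rightarrow> nat \<Rightarrow> real" where
  "rig_row p e x i = (if x \<in> e then p x i - p (THE y. y \<in> e \<and> y \<noteq> x) i else 0)"

definition rows_indep :: "nat \<Rightarrow> 'a set \<Rightarrow> ('a \<Rightarrow> nat \<Rightarrow> real) \<Rightarrow> 'a set set \<Rightarrow> bool" where
  "rows_indep d V p S \<longleftrightarrow>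
     (\<forall>c :: 'a set \<Rightarrow> real.
        (\<forall>u\<in>V. \<forall>i<d. (\<Sum>e\<in>S. c e * rig_row p e u i) = 0) \<longrightarrow> (\<forall>e\<in>S. c e = 0))"

definition gen_p :: "nat \<Rightarrow> 'a set \<Rightarrow> 'a \<Rightarrow> nat \<Rightarrow> real" where
  "gen_p d V = (SOME p. generic d V p)"

definition Rindep :: "nat \<Rightarrow> 'a set \<Rightarrow> 'a set set \<Rightarrow> bool" where
  "Rindep d V S \<longleftrightarrow> finite S \<and> rows_indep d V (gen_p d V) S"

definition Rrank :: "nat \<Rightarrow> 'a set \<Rightarrow> 'a set set \<Rightarrow> nat" where
  "Rrank d V F = Max {card S | S. S \<subseteq> F \<and> Rindep d V S}"

definition Rcircuit :: "nat \<Rightarrow> 'a set \<Rightarrow> 'a set set \<Rightarrow> bool" where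
  "Rcircuit d V C \<longleftrightarrow> finite C \<and> \<not> Rindep d V C \<and> (\<forall>S. S \<subset> C \<longrightarrow> Rindep d V S)"

definition Rcyclic :: "nat \<Rightarrow> 'a set \<Rightarrow> 'a set set \<Rightarrow> bool" where
  "Rcyclic d V D \<longleftrightarrow> D = \<Union> {C. C \<subseteq> D \<and> Rcircuit d V C}"

definition kfold_circuit :: "nat \<Rightarrow> 'a set \<Rightarrow> 'a set set \<Rightarrow> nat \<Rightarrow> bool" where
  "kfold_circuit d V D k \<longleftrightarrow> finite D \<and> Rcyclic d V D \<and> Rrank d V D + k = card D"

definition principal_partition :: "nat \<Rightarrow> 'a set \<Rightarrow> 'a set set \<Rightarrow> 'a set set set \<Rightarrow> bool" where
  "principal_partition d V D P \<longleftrightarrow>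
     (let k = card D - Rrank d V D in
       \<Union> P = D \<and> (\<forall>A\<in>P. A \<noteq> {}) \<and>
       (\<forall>A\<in>P. \<forall>B\<in>P. A \<noteq> B \<longrightarrow> A \<inter> B = {}) \<and>
       {D - A | A. A \<in> P} = {D'. D' \<subseteq> D \<and> kfold_circuit d V D' (k - 1)})"

definition technicolour :: "'a set set set \<Rightarrow> 'a \<Rightarrow> bool" where
  "technicolour P x \<longleftrightarrow>
     (\<exists>A\<in>P. \<exists>B\<in>P. A \<noteq> B \<and> (\<exists>e\<in>A. x \<in> e) \<and> (\<exists>e\<in>B. x \<in> e))"

definition cone_edges :: "'a set set \<Rightarrow> 'a \<Rightarrow> 'a set set" where
  "cone_edges E v = E \<union> {{v, u} | u. u \<in> \<Union> E}"

end

theory Submission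
  imports Defs "HOL-Library.Function_Algebras" "HOL-Analysis.Finite_Cartesian_Product"
    "HOL-Analysis.Continuum_Not_Denumerable"
begin

text \<open>Write \<open>C\<close> for the edges of the cone and \<open>C'\<close> for \<open>C\<close> without the spokes \<open>vx\<close> and \<open>vy\<close>.
  If both spokes lay in one part \<open>A\<close> of the principal partition, then \<open>C - A\<close> would be a
  \<open>(k - 1)\<close>-fold circuit, and counting ranks gives \<open>r\<^sub>2(C') < r\<^sub>2(C)\<close>. But the rows of both spokes
  lie in the span of the rows of \<open>C'\<close>: an infinitesimal motion \<open>q\<close> of \<open>C'\<close>, decomposed along each
  spoke \<open>vu\<close> into a stretch and a turn, has zero stretch off \<open>x\<close> and \<open>y\<close>, so the turn is constant
  on the components of \<open>G - x - y\<close>. A technicolour vertex \<open>x\<close> lies on two cycles of \<open>G\<close>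
  (the circuits of \<open>R\<^sub>1\<close>) that do not share all their edges at \<open>x\<close>. A cycle through \<open>x\<close> avoiding
  \<open>y\<close> forces the stretch at \<open>x\<close> to vanish; otherwise the two cycles provide three \<open>x\<close>--\<open>y\<close>
  routes, whose equations have a nonzero determinant at a generic placement, and again
  the stretch at \<open>x\<close>, i.e. the component of \<open>q\<close> along the row of \<open>vx\<close>, vanishes.\<close>

section \<open>Rational polynomial functions and generic points\<close>

definition monom_eval :: "'b set \<Rightarrow> ('b \<Rightarrow> real) \<Rightarrow> ('b \<Rightarrow> nat) \<Rightarrow> real" where
  "monom_eval I z m = (\<Prod>j\<in>I. z j ^ m j)"

definition rat_coeffs :: "'b set \<Rightarrow> (('b \<Rightarrow> nat) \<Rightarrow> real) set" where
  "rat_coeffs I = {c. finite {m. c m \<noteq> 0} \<and> (\<forall>m. c m \<in> \<rat>) \<and> (\<forall>m. c m \<noteq> 0 \<longrightarrow> (\<forall>j. j \<notin> I \<longrightarrow> m j = 0))}"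

definition poly_eval :: "'b set \<Rightarrow> (('b \<Rightarrow> nat) \<Rightarrow> real) \<Rightarrow> ('b \<Rightarrow> real) \<Rightarrow> real" where
  "poly_eval I c z = (\<Sum>m\<in>{m. c m \<noteq> 0}. c m * monom_eval I z m)"

lemma alg_indep_Q_iff:
  "alg_indep_Q I x \<longleftrightarrow> (\<forall>c\<in>rat_coeffs I. poly_eval I c x = 0 \<longrightarrow> c = 0)"
  unfolding alg_indep_Q_def rat_coeffs_def poly_eval_def monom_eval_def by (auto simp: fun_eq_iff)

lemma monom_eval_add: "monom_eval I z (\<lambda>j. m j + n j) = monom_eval I z m * monom_eval I z n"
  unfolding monom_eval_def by (simp add: power_add prod.distrib)

text \<open>A list of terms (coefficient, exponent vector) may repeat a monomial; this makes closure
  under products trivial.\<close>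

definition rat_terms :: "'b set \<Rightarrow> (real \<times> ('b \<Rightarrow> nat)) list \<Rightarrow> bool" where
  "rat_terms I ts \<longleftrightarrow> (\<forall>(r, m)\<in>set ts. r \<in> \<rat> \<and> (\<forall>j. j \<notin> I \<longrightarrow> m j = 0))"

definition terms_eval :: "'b set \<Rightarrow> (real \<times> ('b \<Rightarrow> nat)) list \<Rightarrow> ('b \<Rightarrow> real) \<Rightarrow> real" where
  "terms_eval I ts z = (\<Sum>(r, m)\<leftarrow>ts. r * monom_eval I z m)"

lemma terms_eval_simps [simp]:
  "terms_eval I [] z = 0"
  "terms_eval I ((r, m) # ts) z = r * monom_eval I z m + terms_eval I ts z"
  "terms_eval I (ts @ us) z = terms_eval I ts z + terms_eval I us z"
  by (simp_all add: terms_eval_def)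

definition rat_polyfun :: "'b set \<Rightarrow> (('b \<Rightarrow> real) \<Rightarrow> real) \<Rightarrow> bool" where
  "rat_polyfun I f \<longleftrightarrow> (\<exists>ts. rat_terms I ts \<and> f = terms_eval I ts)"

lemma rat_polyfun_const: "r \<in> \<rat> \<Longrightarrow> rat_polyfun I (\<lambda>z. r)"
  unfolding rat_polyfun_def
  by (rule exI[of _ "[(r, 0)]"]) (simp add: rat_terms_def monom_eval_def fun_eq_iff)

lemma rat_polyfun_var:
  assumes "finite I" "j \<in> I"
  shows "rat_polyfun I (\<lambda>z. z j)"
proof -
  have "monom_eval I z (0(j := 1)) = z j" for z
    unfolding monom_eval_def using assms
    by (simp add: power_0 if_distrib[of "power _"] prod.delta cong: if_cong)
  then show ?thesis
    unfolding rat_polyfun_def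
    using assms by (intro exI[of _ "[(1, 0(j := 1))]"]) (auto simp: rat_terms_def)
qed

lemma rat_polyfun_add:
  assumes "rat_polyfun I f" "rat_polyfun I g"
  shows "rat_polyfun I (\<lambda>z. f z + g z)"
proof -
  obtain ts us where "rat_terms I ts" "f = terms_eval I ts" "rat_terms I us" "g = terms_eval I us"
    using assms unfolding rat_polyfun_def by blast
  then show ?thesis
    unfolding rat_polyfun_def
    by (intro exI[of _ "ts @ us"]) (auto simp: rat_terms_def)
qed

lemma rat_polyfun_uminus:
  assumes "rat_polyfun I f"
  shows "rat_polyfun I (\<lambda>z. - f z)"
proof -
  obtain ts where ts: "rat_terms I ts" "f = terms_eval I ts"
    using assms unfolding rat_polyfun_def by blast
  have "terms_eval I (map (\<lambda>(r, m). (- r, m)) ts) z = - terms_eval I ts z" for z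
    by (induction ts) auto
  moreover have "rat_terms I (map (\<lambda>(r, m). (- r, m)) ts)"
    using ts(1) by (auto simp: rat_terms_def)
  ultimately show ?thesis
    unfolding rat_polyfun_def ts(2) by (intro exI[of _ "map (\<lambda>(r, m). (- r, m)) ts"]) auto
qed

lemma rat_polyfun_diff:
  assumes "rat_polyfun I f" "rat_polyfun I g"
  shows "rat_polyfun I (\<lambda>z. f z - g z)"
  using rat_polyfun_add[OF assms(1) rat_polyfun_uminus[OF assms(2)]] by simp

lemma rat_polyfun_mult:
  assumes "rat_polyfun I f" "rat_polyfun I g"
  shows "rat_polyfun I (\<lambda>z. f z * g z)"
proof -
  obtain ts us where tu: "rat_terms I ts" "f = terms_eval I ts" "rat_terms I us" "g = terms_eval I us"
    using assms unfolding rat_polyfun_def by blast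
  define prod_terms where
    "prod_terms = concat (map (\<lambda>(r, m). map (\<lambda>(s, n). (r * s, m + n)) us) ts)"
  have "terms_eval I prod_terms z = terms_eval I ts z * terms_eval I us z" for z
  proof -
    have "terms_eval I (map (\<lambda>(s, n). (r * s, m + n)) us) z = r * monom_eval I z m * terms_eval I us z"
      for r m
      by (induction us) (auto simp: monom_eval_add distrib_left mult_ac)
    then show ?thesis
      unfolding prod_terms_def by (induction ts) (auto simp: algebra_simps)
  qed
  moreover have "rat_terms I prod_terms"
    using tu(1,3) unfolding rat_terms_def prod_terms_def by (fastforce intro: Rats_mult)
  ultimately show ?thesis
    unfolding rat_polyfun_def tu(2,4) by (intro exI[of _ prod_terms]) auto
qed

lemma rat_polyfun_power:
  assumes "rat_polyfun I f"
  shows "rat_polyfun I (\<lambda>z. f z ^ n)"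
  by (induction n) (simp_all add: rat_polyfun_const rat_polyfun_mult[OF assms])

lemmas rat_polyfun_intros =
  rat_polyfun_add rat_polyfun_diff rat_polyfun_mult rat_polyfun_uminus rat_polyfun_power

lemma poly_eval_superset:
  assumes "finite S" "{m. c m \<noteq> 0} \<subseteq> S"
  shows "poly_eval I c z = (\<Sum>m\<in>S. c m * monom_eval I z m)"
  unfolding poly_eval_def by (rule sum.mono_neutral_left) (use assms in auto)

lemma rat_polyfun_coeffs:
  assumes "rat_polyfun I f"
  obtains c where "c \<in> rat_coeffs I" "f = poly_eval I c"
proof -
  obtain ts where ts: "rat_terms I ts" "f = terms_eval I ts"
    using assms unfolding rat_polyfun_def by blast
  have "\<exists>c\<in>rat_coeffs I. terms_eval I ts = poly_eval I c"
    using ts(1)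
  proof (induction ts)
    case Nil
    have "0 \<in> rat_coeffs I" by (simp add: rat_coeffs_def)
    then show ?case by (intro bexI[of _ 0]) (auto simp: poly_eval_def fun_eq_iff)
  next
    case (Cons t ts)
    obtain r m where t: "t = (r, m)" by fastforce
    obtain c where c: "c \<in> rat_coeffs I" "terms_eval I ts = poly_eval I c"
      using Cons by (auto simp: rat_terms_def)
    define c' where "c' = (\<lambda>n. c n + (if n = m then r else 0))"
    define S where "S = insert m {n. c n \<noteq> 0}"
    have S: "finite S" "{n. c n \<noteq> 0} \<subseteq> S" "{n. c' n \<noteq> 0} \<subseteq> S"
      using c(1) by (auto simp: S_def c'_def rat_coeffs_def)
    have rm: "r \<in> \<rat>" "\<forall>j. j \<notin> I \<longrightarrow> m j = 0"
      using Cons.prems t by (auto simp: rat_terms_def)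
    have "c' \<in> rat_coeffs I"
      using c(1) rm finite_subset[OF S(3,1)] unfolding rat_coeffs_def by (auto simp: c'_def)
    moreover have "terms_eval I (t # ts) z = poly_eval I c' z" for z
    proof -
      have "terms_eval I (t # ts) z = r * monom_eval I z m + (\<Sum>n\<in>S. c n * monom_eval I z n)"
        using c(2) poly_eval_superset[OF S(1,2)] by (simp add: t)
      also have "\<dots> = (\<Sum>n\<in>S. c' n * monom_eval I z n)"
        using S(1) by (simp add: c'_def distrib_right sum.distrib if_distrib[of "\<lambda>a. a * _"]
            sum.delta S_def cong: if_cong)
      finally show ?thesis using poly_eval_superset[OF S(1,3)] by simp
    qed
    ultimately show ?case by blast
  qed
  then show ?thesis using that ts(2) by blast
qed

lemma alg_indep_Q_nonzero:
  assumes "alg_indep_Q I x" "rat_polyfun I f" "f w \<noteq> 0"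
  shows "f x \<noteq> 0"
proof
  assume "f x = 0"
  obtain c where "c \<in> rat_coeffs I" "f = poly_eval I c"
    using rat_polyfun_coeffs[OF assms(2)] .
  with assms(1) \<open>f x = 0\<close> have "c = 0" by (simp add: alg_indep_Q_iff)
  with \<open>f = poly_eval I c\<close> assms(3) show False by (simp add: poly_eval_def)
qed

lemma countable_rat_coeffs:
  fixes I :: "'b set"
  assumes "finite I"
  shows "countable (rat_coeffs I)"
proof -
  define M where "M = {m. \<forall>j. j \<notin> I \<longrightarrow> m j = (0::nat)}"
  have "inj_on (\<lambda>m. restrict m I) M"
  proof (rule inj_onI, rule ext)
    fix m1 m2 j assume "m1 \<in> M" "m2 \<in> M" "restrict m1 I = restrict m2 I"
    then show "m1 j = m2 j" by (cases "j \<in> I") (auto simp: M_def dest: fun_cong[of _ _ j])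
  qed
  moreover have "countable (Pi\<^sub>E I (\<lambda>_. UNIV :: nat set))"
    using assms by (intro countable_PiE) auto
  then have "countable ((\<lambda>m. restrict m I) ` M)"
    by (rule countable_subset[rotated]) auto
  ultimately have "countable M"
    by (rule countable_image_inj_on[rotated])
  then have countable_graphs: "countable {G. finite G \<and> G \<subseteq> M \<times> \<rat>}"
    using countable_rat by (intro countable_Collect_finite_subset) blast
  define graph where "graph c = (\<lambda>m. (m, c m)) ` {m. c m \<noteq> 0}"
    for c :: "('b \<Rightarrow> nat) \<Rightarrow> real"
  have mem_graph: "(m, r) \<in> graph c \<longleftrightarrow> c m = r \<and> r \<noteq> 0" for c m r
    by (auto simp: graph_def)
  have "inj_on graph (rat_coeffs I)"
  proof (rule inj_onI)
    fix c1 c2 assume "graph c1 = graph c2"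
    then have eq: "c1 m = r \<and> r \<noteq> 0 \<longleftrightarrow> c2 m = r \<and> r \<noteq> 0" for m r
      by (simp add: mem_graph[symmetric])
    show "c1 = c2"
    proof
      fix m show "c1 m = c2 m" using eq[of m "c1 m"] eq[of m "c2 m"] by auto
    qed
  qed
  moreover have "graph ` rat_coeffs I \<subseteq> {G. finite G \<and> G \<subseteq> M \<times> \<rat>}"
    by (auto simp: graph_def rat_coeffs_def M_def)
  then have "countable (graph ` rat_coeffs I)"
    using countable_graphs by (rule countable_subset)
  ultimately show ?thesis by (rule countable_image_inj_on[rotated])
qed

lemma alg_indep_Q_empty: "alg_indep_Q {} x"
proof -
  have "c = 0" if "c \<in> rat_coeffs {}" "poly_eval {} c x = 0" for c
  proof -
    have "{m. c m \<noteq> 0} \<subseteq> {0}" using that(1) by (auto simp: rat_coeffs_def fun_eq_iff)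
    then have "poly_eval {} c x = c 0"
      by (subst poly_eval_superset[of "{0}"]) (auto simp: monom_eval_def)
    then show ?thesis using that \<open>{m. c m \<noteq> 0} \<subseteq> {0}\<close> by (auto simp: fun_eq_iff)
  qed
  then show ?thesis by (simp add: alg_indep_Q_iff)
qed

text \<open>The coefficient of the \<open>k\<close>-th power of the variable \<open>j\<close>, as a polynomial in the others.\<close>

definition coeff_slice :: "'b \<Rightarrow> nat \<Rightarrow> (('b \<Rightarrow> nat) \<Rightarrow> real) \<Rightarrow> ('b \<Rightarrow> nat) \<Rightarrow> real" where
  "coeff_slice j k c = (\<lambda>m. if m j = 0 then c (m(j := k)) else 0)"

definition degree_in :: "'b \<Rightarrow> (('b \<Rightarrow> nat) \<Rightarrow> real) \<Rightarrow> nat" where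
  "degree_in j c = Max (insert 0 ((\<lambda>m. m j) ` {m. c m \<noteq> 0}))"

lemma support_coeff_slice:
  "{m. coeff_slice j k c m \<noteq> 0} = (\<lambda>m. m(j := 0)) ` {m. c m \<noteq> 0 \<and> m j = k}"
proof (intro set_eqI iffI)
  fix m assume "m \<in> {m. coeff_slice j k c m \<noteq> 0}"
  then have "m j = 0" "c (m(j := k)) \<noteq> 0"
    unfolding coeff_slice_def by (auto split: if_splits)
  then have "m = (m(j := k))(j := 0)" "m(j := k) \<in> {m. c m \<noteq> 0 \<and> m j = k}"
    by auto
  then show "m \<in> (\<lambda>m. m(j := 0)) ` {m. c m \<noteq> 0 \<and> m j = k}"
    by (rule image_eqI)
next
  fix m assume "m \<in> (\<lambda>m. m(j := 0)) ` {m. c m \<noteq> 0 \<and> m j = k}"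
  then obtain m' where "c m' \<noteq> 0" "m' j = k" "m = m'(j := 0)" by blast
  then show "m \<in> {m. coeff_slice j k c m \<noteq> 0}"
    by (simp add: coeff_slice_def fun_upd_idem)
qed

lemma coeff_slice_rat_coeffs:
  assumes "c \<in> rat_coeffs (insert j I)"
  shows "coeff_slice j k c \<in> rat_coeffs I"
  unfolding rat_coeffs_def
proof (intro CollectI conjI allI impI)
  show "finite {m. coeff_slice j k c m \<noteq> 0}"
    using assms unfolding support_coeff_slice rat_coeffs_def by simp
  show "coeff_slice j k c m \<in> \<rat>" for m
    using assms unfolding rat_coeffs_def coeff_slice_def by simp
  fix m i assume "coeff_slice j k c m \<noteq> 0" "i \<notin> I"
  then show "m i = 0"
    using assms unfolding rat_coeffs_def coeff_slice_def by (cases "i = j") (auto split: if_splits)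
qed

lemma coeff_slice_beyond_degree:
  assumes "finite {m. c m \<noteq> 0}" "degree_in j c < k"
  shows "coeff_slice j k c = 0"
proof -
  have "m j \<le> degree_in j c" if "c m \<noteq> 0" for m
    unfolding degree_in_def using assms(1) that by (intro Max_ge) auto
  then have "{m. c m \<noteq> 0 \<and> m j = k} = {}"
    using assms(2) by fastforce
  then show ?thesis
    using support_coeff_slice[of j k c] by (auto simp: fun_eq_iff)
qed

lemma coeff_slices_zero:
  assumes "\<And>k. coeff_slice j k c = 0"
  shows "c = 0"
proof
  fix m
  have "coeff_slice j (m j) c (m(j := 0)) = 0" using assms by simp
  then show "c m = 0 m" by (simp add: coeff_slice_def)
qed

lemma poly_eval_coeff_slice:
  assumes "j \<notin> I"
  shows "poly_eval I (coeff_slice j k c) z = (\<Sum>m | c m \<noteq> 0 \<and> m j = k. c m * monom_eval I z m)"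
proof -
  have inj: "inj_on (\<lambda>m. m(j := 0)) {m. c m \<noteq> 0 \<and> m j = k}"
    by (rule inj_onI) (metis (mono_tags) fun_upd_triv fun_upd_upd mem_Collect_eq)
  have "monom_eval I z (m(j := 0)) = monom_eval I z m" for m
    unfolding monom_eval_def using assms by (intro prod.cong) auto
  moreover have "coeff_slice j k c (m(j := 0)) = c m" if "m j = k" for m
    using that by (simp add: coeff_slice_def fun_upd_idem)
  ultimately show ?thesis
    unfolding poly_eval_def support_coeff_slice by (simp add: sum.reindex[OF inj])
qed

lemma poly_eval_insert_by_degree:
  assumes "finite I" "j \<notin> I" "finite {m. c m \<noteq> 0}"
  shows "poly_eval (insert j I) c (z(j := t))
    = (\<Sum>k\<le>degree_in j c. poly_eval I (coeff_slice j k c) z * t ^ k)"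
proof -
  have monom: "monom_eval (insert j I) (z(j := t)) m = t ^ m j * monom_eval I z m" for m
  proof -
    have "(\<Prod>i\<in>I. (z(j := t)) i ^ m i) = (\<Prod>i\<in>I. z i ^ m i)"
      using assms(2) by (intro prod.cong) auto
    then show ?thesis unfolding monom_eval_def using assms(1,2) by simp
  qed
  have degree: "(\<lambda>m. m j) ` {m. c m \<noteq> 0} \<subseteq> {..degree_in j c}"
    unfolding degree_in_def using assms(3) by (auto intro!: Max_ge)
  have "poly_eval (insert j I) c (z(j := t)) = (\<Sum>m | c m \<noteq> 0. c m * monom_eval I z m * t ^ m j)"
    unfolding poly_eval_def monom by (simp add: mult_ac)
  also have "\<dots> = (\<Sum>k\<le>degree_in j c. \<Sum>m | c m \<noteq> 0 \<and> m j = k. c m * monom_eval I z m * t ^ k)"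
    using sum.group[OF assms(3) _ degree, of "\<lambda>m. c m * monom_eval I z m * t ^ m j"] by simp
  finally show ?thesis
    by (simp add: poly_eval_coeff_slice[OF assms(2)] sum_distrib_right)
qed

lemma alg_indep_Q_insert:
  assumes "finite I" "j \<notin> I" "alg_indep_Q I x"
  shows "\<exists>t. alg_indep_Q (insert j I) (x(j := t))"
proof -
  \<comment> \<open>Choose \<open>t\<close> outside the roots of the countably many nonzero polynomials in \<open>t\<close> obtained
    by substituting \<open>x\<close> for the other variables.\<close>
  define a where "a c k = poly_eval I (coeff_slice j k c) x" for c k
  define roots where "roots c =
    (if \<forall>k\<le>degree_in j c. a c k = 0 then {} else {t. (\<Sum>k\<le>degree_in j c. a c k * t ^ k) = 0})" for c
  have "finite (roots c)" for c
  proof (cases "\<forall>k\<le>degree_in j c. a c k = 0")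
    case False
    then obtain k where "k \<le> degree_in j c" "a c k \<noteq> 0" by blast
    then show ?thesis
      unfolding roots_def using False polyfun_rootbound[of "a c" k "degree_in j c"] by simp
  qed (simp add: roots_def)
  then have "countable (\<Union>c\<in>rat_coeffs (insert j I). roots c)"
    using assms(1) by (intro countable_UN countable_rat_coeffs countable_finite) auto
  then have "(\<Union>c\<in>rat_coeffs (insert j I). roots c) \<noteq> UNIV"
    using uncountable_UNIV_real by auto
  then obtain t where t: "t \<notin> (\<Union>c\<in>rat_coeffs (insert j I). roots c)"
    by blast
  have "c = 0" if c: "c \<in> rat_coeffs (insert j I)" "poly_eval (insert j I) c (x(j := t)) = 0" for c
  proof (rule coeff_slices_zero)
    fix k
    have fin: "finite {m. c m \<noteq> 0}" using c(1) by (simp add: rat_coeffs_def)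
    have "t \<notin> roots c" using t c(1) by blast
    moreover have "(\<Sum>k\<le>degree_in j c. a c k * t ^ k) = 0"
      using c(2) by (simp add: poly_eval_insert_by_degree[OF assms(1,2) fin] a_def)
    ultimately have a0: "\<forall>k\<le>degree_in j c. a c k = 0"
      unfolding roots_def by (simp split: if_splits)
    show "coeff_slice j k c = 0"
    proof (cases "k \<le> degree_in j c")
      case True
      then show ?thesis
        using a0 assms(3) coeff_slice_rat_coeffs[OF c(1)] by (simp add: alg_indep_Q_iff a_def)
    qed (simp add: coeff_slice_beyond_degree[OF fin])
  qed
  then show ?thesis by (auto simp: alg_indep_Q_iff)
qed

lemma alg_indep_Q_exists:
  assumes "finite I"
  shows "\<exists>x. alg_indep_Q I x"
  using assms
proof (induction I rule: finite_induct)
  case empty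
  show ?case using alg_indep_Q_empty by (rule exI)
next
  case (insert j I)
  then obtain x where "alg_indep_Q I x" by blast
  then show ?case using alg_indep_Q_insert[OF insert.hyps(1,2)] by blast
qed

lemma generic_gen_p:
  assumes "finite V"
  shows "generic d V (gen_p d V)"
proof -
  have "finite (V \<times> {..<d})" using assms by simp
  then obtain x where "alg_indep_Q (V \<times> {..<d}) x"
    using alg_indep_Q_exists by blast
  then have "generic d V (curry x)" by (simp add: generic_def)
  then show ?thesis unfolding gen_p_def by (rule someI[of "generic d V"])
qed

lemma gen_p_nonzero:
  assumes "finite V" "rat_polyfun (V \<times> {..<d}) (\<lambda>z. f (curry z))" "f q \<noteq> 0"
  shows "f (gen_p d V) \<noteq> 0"
proof -
  have "alg_indep_Q (V \<times> {..<d}) (case_prod (gen_p d V))"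
    using generic_gen_p[OF assms(1)] by (simp add: generic_def)
  from alg_indep_Q_nonzero[OF this assms(2), of "case_prod q"] show ?thesis
    using assms(3) by simp
qed

lemma rat_polyfun_coord:
  fixes d :: nat
  assumes "finite V" "u \<in> V" "i < d"
  shows "rat_polyfun (V \<times> {..<d}) (\<lambda>z. curry z u i)"
proof -
  have "rat_polyfun (V \<times> {..<d}) (\<lambda>z. z (u, i))"
    using assms by (intro rat_polyfun_var) auto
  then show ?thesis by simp
qed

section \<open>Rows of the rigidity matrix as vectors\<close>

context vector_space
begin

lemma independent_family_iff:
  assumes "finite S"
  shows "(\<forall>c. (\<Sum>e\<in>S. scale (c e) (f e)) = 0 \<longrightarrow> (\<forall>e\<in>S. c e = 0)) \<longleftrightarrow> inj_on f S \<and> independent (f ` S)"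
proof
  assume indep: "\<forall>c. (\<Sum>e\<in>S. scale (c e) (f e)) = 0 \<longrightarrow> (\<forall>e\<in>S. c e = 0)"
  have "inj_on f S"
  proof (rule inj_onI, rule ccontr)
    fix e1 e2 assume e: "e1 \<in> S" "e2 \<in> S" "f e1 = f e2" "e1 \<noteq> e2"
    define c :: "_ \<Rightarrow> 'a" where "c e = (if e = e1 then 1 else if e = e2 then -1 else 0)" for e
    have "(\<Sum>e\<in>S. scale (c e) (f e)) = (\<Sum>e\<in>{e1, e2}. scale (c e) (f e))"
      using assms e by (intro sum.mono_neutral_right) (auto simp: c_def)
    also have "\<dots> = 0" using e by (simp add: c_def)
    finally have "c e1 = 0" using indep e(1) by blast
    then show False by (simp add: c_def)
  qed
  moreover have "independent (f ` S)"
  proof (rule independent_if_scalars_zero)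
    fix g y assume "(\<Sum>y\<in>f ` S. scale (g y) y) = 0" "y \<in> f ` S"
    then show "g y = 0"
      using indep[rule_format, of "g \<circ> f"] by (auto simp: sum.reindex[OF \<open>inj_on f S\<close>])
  qed (use assms in simp)
  ultimately show "inj_on f S \<and> independent (f ` S)" ..
next
  assume inj_indep: "inj_on f S \<and> independent (f ` S)"
  show "\<forall>c. (\<Sum>e\<in>S. scale (c e) (f e)) = 0 \<longrightarrow> (\<forall>e\<in>S. c e = 0)"
  proof (intro allI impI ballI)
    fix c e assume sum0: "(\<Sum>e\<in>S. scale (c e) (f e)) = 0" and "e \<in> S"
    define g where "g = c \<circ> the_inv_into S f"
    have "(\<Sum>y\<in>f ` S. scale (g y) y) = 0"
      using sum0 inj_indep by (simp add: sum.reindex g_def the_inv_into_f_f)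
    then have "g (f e) = 0"
      using inj_indep assms \<open>e \<in> S\<close> dependent_finite[of "f ` S"] by auto
    then show "c e = 0"
      using inj_indep \<open>e \<in> S\<close> by (simp add: g_def the_inv_into_f_f)
  qed
qed

end

definition scale_fun :: "real \<Rightarrow> ('c \<Rightarrow> real) \<Rightarrow> 'c \<Rightarrow> real" where
  "scale_fun r f = (\<lambda>k. r * f k)"

lemma scale_fun_apply [simp]: "scale_fun r f k = r * f k"
  by (simp add: scale_fun_def)

interpretation fun_vec: vector_space scale_fun
  by unfold_locales (auto simp: scale_fun_def fun_eq_iff algebra_simps)

lemma sum_fun_apply: "(\<Sum>e\<in>S. f e) k = (\<Sum>e\<in>S. f e k)"
  by (induction S rule: infinite_finite_induct) auto

definition rig_vec :: "nat \<Rightarrow> 'a set \<Rightarrow> ('a \<Rightarrow> nat \<Rightarrow> real) \<Rightarrow> 'a set \<Rightarrow> 'a \<times> nat \<Rightarrow> real" where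
  "rig_vec d V p e = (\<lambda>(u, i). if u \<in> V \<and> i < d then rig_row p e u i else 0)"

lemma rows_indep_iff:
  assumes "finite S"
  shows "rows_indep d V p S \<longleftrightarrow> inj_on (rig_vec d V p) S \<and> fun_vec.independent (rig_vec d V p ` S)"
proof -
  have "(\<Sum>e\<in>S. scale_fun (c e) (rig_vec d V p e)) (u, i) =
      (if u \<in> V \<and> i < d then \<Sum>e\<in>S. c e * rig_row p e u i else 0)" for c u i
    by (cases "u \<in> V \<and> i < d") (auto simp: rig_vec_def sum_fun_apply)
  then have "(\<Sum>e\<in>S. scale_fun (c e) (rig_vec d V p e)) = 0 \<longleftrightarrow>
      (\<forall>u\<in>V. \<forall>i<d. (\<Sum>e\<in>S. c e * rig_row p e u i) = 0)" for c
    by (auto simp: fun_eq_iff split_paired_All)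
  then show ?thesis
    unfolding rows_indep_def fun_vec.independent_family_iff[OF assms, symmetric] by simp
qed

lemma rows_indepD:
  assumes "rows_indep d V p S" "\<And>u i. u \<in> V \<Longrightarrow> i < d \<Longrightarrow> (\<Sum>e\<in>S. c e * rig_row p e u i) = 0"
  shows "e \<in> S \<Longrightarrow> c e = 0"
  using assms unfolding rows_indep_def by simp

lemma Rindep_iff:
  "Rindep d V S \<longleftrightarrow>
    finite S \<and> inj_on (rig_vec d V (gen_p d V)) S \<and> fun_vec.independent (rig_vec d V (gen_p d V) ` S)"
  unfolding Rindep_def using rows_indep_iff by blast

lemma Rindep_subset:
  assumes "Rindep d V S" "T \<subseteq> S"
  shows "Rindep d V T"
  using assms(1) finite_subset[OF assms(2)] inj_on_subset[OF _ assms(2)]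
    fun_vec.independent_mono[OF _ image_mono[OF assms(2)]]
  unfolding Rindep_iff by blast

lemma Rindep_empty: "Rindep d V {}"
  by (simp add: Rindep_def rows_indep_def)

lemma finite_Rindep_cards:
  assumes "finite F"
  shows "finite {card S | S. S \<subseteq> F \<and> Rindep d V S}"
proof (rule finite_subset)
  show "{card S | S. S \<subseteq> F \<and> Rindep d V S} \<subseteq> card ` Pow F" by blast
  show "finite (card ` Pow F)" using assms by simp
qed

lemma card_le_Rrank:
  assumes "finite F" "S \<subseteq> F" "Rindep d V S"
  shows "card S \<le> Rrank d V F"
  unfolding Rrank_def by (rule Max_ge[OF finite_Rindep_cards[OF assms(1)]]) (use assms(2,3) in blast)

lemma Rrank_basis:
  assumes "finite F"
  obtains S where "S \<subseteq> F" "Rindep d V S" "card S = Rrank d V F"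
proof -
  have "0 \<in> {card S | S. S \<subseteq> F \<and> Rindep d V S}"
    using Rindep_empty[of d V] by (intro CollectI exI[of _ "{}"]) simp
  then have "{card S | S. S \<subseteq> F \<and> Rindep d V S} \<noteq> {}" by blast
  then have "Rrank d V F \<in> {card S | S. S \<subseteq> F \<and> Rindep d V S}"
    unfolding Rrank_def by (rule Max_in[OF finite_Rindep_cards[OF assms]])
  then obtain S where "Rrank d V F = card S" "S \<subseteq> F" "Rindep d V S" by blast
  then show ?thesis by (intro that) simp_all
qed

lemma Rrank_le_card:
  assumes "finite F"
  shows "Rrank d V F \<le> card F"
proof -
  obtain S where S: "S \<subseteq> F" "Rindep d V S" "card S = Rrank d V F"
    by (rule Rrank_basis[OF assms])
  then show ?thesis using card_mono[OF assms S(1)] by simp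
qed

lemma Rrank_Un_le: "finite X \<Longrightarrow> finite Y \<Longrightarrow> Rrank d V (X \<union> Y) \<le> Rrank d V X + card Y"
proof -
  assume fin: "finite X" "finite Y"
  obtain S where S: "S \<subseteq> X \<union> Y" "Rindep d V S" "card S = Rrank d V (X \<union> Y)"
    by (rule Rrank_basis[of "X \<union> Y" d V]) (use fin in simp)
  have "card S \<le> card (S \<inter> X) + card (S \<inter> Y)"
    using card_Un_le[of "S \<inter> X" "S \<inter> Y"] S(1) by (simp add: Int_Un_distrib[symmetric] Int_absorb2)
  moreover have "card (S \<inter> X) \<le> Rrank d V X"
    using card_le_Rrank[OF fin(1)] Rindep_subset[OF S(2)] by blast
  moreover have "card (S \<inter> Y) \<le> card Y" using fin(2) by (simp add: card_mono)
  ultimately show ?thesis using S(3) by linarith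
qed

lemma Rrank_basis_spans:
  assumes "finite F" "S \<subseteq> F" "Rindep d V S" "card S = Rrank d V F" "e \<in> F"
  shows "rig_vec d V (gen_p d V) e \<in> fun_vec.span (rig_vec d V (gen_p d V) ` S)"
proof (rule ccontr)
  let ?r = "rig_vec d V (gen_p d V)"
  assume not_span: "?r e \<notin> fun_vec.span (?r ` S)"
  then have new: "?r e \<notin> ?r ` S" by (auto intro: fun_vec.span_base)
  then have "e \<notin> S" by blast
  have "Rindep d V (insert e S)"
    using assms(3) new not_span \<open>e \<notin> S\<close> unfolding Rindep_iff by (simp add: fun_vec.independent_insertI)
  then have "card (insert e S) \<le> Rrank d V F"
    using assms(2,5) by (intro card_le_Rrank[OF assms(1)]) simp_all
  moreover have "finite S" using assms(3) by (simp add: Rindep_def)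
  ultimately show False using assms(4) \<open>e \<notin> S\<close> by simp
qed

lemma Rrank_le_if_span:
  assumes "finite F" "F' \<subseteq> F"
    and "\<And>e. e \<in> F \<Longrightarrow> rig_vec d V (gen_p d V) e \<in> fun_vec.span (rig_vec d V (gen_p d V) ` F')"
  shows "Rrank d V F \<le> Rrank d V F'"
proof -
  let ?r = "rig_vec d V (gen_p d V)"
  have fin': "finite F'" using assms(1,2) by (rule finite_subset[rotated])
  obtain S where S: "S \<subseteq> F" "Rindep d V S" "card S = Rrank d V F"
    by (rule Rrank_basis[OF assms(1)])
  obtain T where T: "T \<subseteq> F'" "Rindep d V T" "card T = Rrank d V F'"
    by (rule Rrank_basis[OF fin'])
  have "fun_vec.span (?r ` F') \<subseteq> fun_vec.span (?r ` T)"
    using Rrank_basis_spans[OF fin' T] by (intro fun_vec.span_minimal fun_vec.subspace_span) auto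
  then have "?r ` S \<subseteq> fun_vec.span (?r ` T)"
    using assms(3) S(1) by auto
  moreover have "finite T" "inj_on ?r T" "fun_vec.independent (?r ` S)" "inj_on ?r S"
    using S(2) T(2) by (simp_all add: Rindep_iff)
  ultimately have "card (?r ` S) \<le> card (?r ` T)"
    using fun_vec.independent_span_bound[of "?r ` T" "?r ` S"] by simp
  then show ?thesis
    using S(3) T(3) \<open>inj_on ?r S\<close> \<open>inj_on ?r T\<close> by (simp add: card_image)
qed

section \<open>Orthogonality to finitely supported vectors\<close>

definition inner_on :: "'c set \<Rightarrow> ('c \<Rightarrow> real) \<Rightarrow> ('c \<Rightarrow> real) \<Rightarrow> real" where
  "inner_on K f g = (\<Sum>k\<in>K. f k * g k)"

definition supported_on :: "'c set \<Rightarrow> ('c \<Rightarrow> real) \<Rightarrow> bool" where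
  "supported_on K f \<longleftrightarrow> (\<forall>k. k \<notin> K \<longrightarrow> f k = 0)"

lemma inner_on_span_eq_0:
  assumes "\<And>f. f \<in> F \<Longrightarrow> inner_on K q f = 0" "y \<in> fun_vec.span F"
  shows "inner_on K q y = 0"
proof -
  obtain t r where t: "finite t" "t \<subseteq> F" "y = (\<Sum>a\<in>t. scale_fun (r a) a)"
    using assms(2) unfolding fun_vec.span_explicit by blast
  have "inner_on K q y = (\<Sum>a\<in>t. r a * inner_on K q a)"
    unfolding inner_on_def t(3) sum_fun_apply
    by (simp add: sum_distrib_left sum_distrib_right mult_ac sum.swap[of _ K])
  also have "\<dots> = 0" using assms(1) t(2) by (auto intro!: sum.neutral)
  finally show ?thesis .
qed

lemma supported_on_span:
  assumes "\<And>f. f \<in> F \<Longrightarrow> supported_on K f" "y \<in> fun_vec.span F"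
  shows "supported_on K y"
proof -
  obtain t r where t: "finite t" "t \<subseteq> F" "y = (\<Sum>a\<in>t. scale_fun (r a) a)"
    using assms(2) unfolding fun_vec.span_explicit by blast
  then show ?thesis
    using assms(1) by (auto simp: supported_on_def sum_fun_apply intro!: sum.neutral)
qed

lemma inner_on_self_eq_0:
  assumes "finite K" "supported_on K f" "inner_on K f f = 0"
  shows "f = 0"
proof
  fix k
  have "\<forall>k\<in>K. f k * f k = 0"
    using assms(1,3) unfolding inner_on_def by (subst sum_nonneg_eq_0_iff[symmetric]) auto
  then show "f k = 0 k" using assms(2) by (cases "k \<in> K") (auto simp: supported_on_def)
qed

lemma orthogonal_decomposition:
  assumes "finite F" "finite K" "\<And>f. f \<in> F \<Longrightarrow> supported_on K f" "supported_on K r"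
  shows "\<exists>s\<in>fun_vec.span F. \<forall>f\<in>F. inner_on K (r - s) f = 0"
  using assms(1,3,4)
proof (induction F arbitrary: r rule: finite_induct)
  case empty
  show ?case using fun_vec.span_zero by blast
next
  case (insert t F)
  obtain s1 where s1: "s1 \<in> fun_vec.span F" "\<forall>f\<in>F. inner_on K (r - s1) f = 0"
    using insert.IH[of r] insert.prems by blast
  obtain s0 where s0: "s0 \<in> fun_vec.span F" "\<forall>f\<in>F. inner_on K (t - s0) f = 0"
    using insert.IH[of t] insert.prems by blast
  define t' where "t' = t - s0"
  \<comment> \<open>Gram--Schmidt step; \<open>\<alpha> = 0\<close> (division by zero) when \<open>t' = 0\<close>.\<close>
  define \<alpha> where "\<alpha> = inner_on K (r - s1) t' / inner_on K t' t'"
  define s where "s = s1 + scale_fun \<alpha> t'"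
  have span_mono: "fun_vec.span F \<subseteq> fun_vec.span (insert t F)"
    by (rule fun_vec.span_mono) blast
  have "t' \<in> fun_vec.span (insert t F)"
    unfolding t'_def using fun_vec.span_base[of t] span_mono s0(1) by (intro fun_vec.span_diff) auto
  then have "s \<in> fun_vec.span (insert t F)"
    unfolding s_def using s1(1) span_mono by (intro fun_vec.span_add fun_vec.span_scale) auto
  have inner_s: "inner_on K (r - s) f = inner_on K (r - s1) f - \<alpha> * inner_on K t' f" for f
    unfolding s_def inner_on_def by (simp add: algebra_simps sum_subtractf sum_distrib_left sum.distrib)
  have perp_F: "\<forall>f\<in>F. inner_on K (r - s) f = 0"
    using s0(2) s1(2) by (simp add: inner_s t'_def)
  have "supported_on K s0"
    by (rule supported_on_span[OF _ s0(1)]) (use insert.prems(1) in blast)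
  then have "supported_on K t'"
    using insert.prems(1)[of t] by (simp add: t'_def supported_on_def)
  have "inner_on K (r - s) t' = 0"
  proof (cases "inner_on K t' t' = 0")
    case True
    then have "t' = 0" using inner_on_self_eq_0[OF assms(2) \<open>supported_on K t'\<close>] by simp
    then show ?thesis by (simp add: inner_on_def)
  qed (simp add: inner_s \<alpha>_def)
  moreover have "inner_on K (r - s) s0 = 0"
    using inner_on_span_eq_0[OF _ s0(1)] perp_F by blast
  moreover have "inner_on K (r - s) t = inner_on K (r - s) t' + inner_on K (r - s) s0"
    unfolding inner_on_def t'_def by (simp add: distrib_left sum.distrib[symmetric] algebra_simps)
  ultimately have "inner_on K (r - s) t = 0" by simp
  then show ?case using perp_F \<open>s \<in> fun_vec.span (insert t F)\<close> by blast
qed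

lemma in_span_if_orthogonal:
  assumes "finite K" "finite F" "\<And>f. f \<in> F \<Longrightarrow> supported_on K f" "supported_on K r"
    and "\<And>q. (\<And>f. f \<in> F \<Longrightarrow> inner_on K q f = 0) \<Longrightarrow> inner_on K q r = 0"
  shows "r \<in> fun_vec.span F"
proof -
  obtain s where s: "s \<in> fun_vec.span F" "\<forall>f\<in>F. inner_on K (r - s) f = 0"
    using orthogonal_decomposition[OF assms(2,1,3,4)] by blast
  have "inner_on K (r - s) r = 0" using assms(5) s(2) by blast
  moreover have "inner_on K (r - s) s = 0" using inner_on_span_eq_0[OF _ s(1)] s(2) by blast
  ultimately have "inner_on K (r - s) (r - s) = 0"
    by (simp add: inner_on_def right_diff_distrib sum_subtractf)
  moreover have "supported_on K (r - s)"
    using supported_on_span[OF assms(3) s(1)] assms(4) by (simp add: supported_on_def)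
  ultimately have "r - s = 0" using inner_on_self_eq_0[OF assms(1)] by blast
  then show ?thesis using s(1) by simp
qed

section \<open>Cycles, and the circuits of the graphic matroid\<close>

lemma rig_row_doubleton: "a \<noteq> b \<Longrightarrow> rig_row p {a, b} a i = p a i - p b i"
proof -
  assume "a \<noteq> b"
  then have "(THE y. y \<in> {a, b} \<and> y \<noteq> a) = b" by (intro the_equality) auto
  then show ?thesis by (simp add: rig_row_def)
qed

lemma rig_row_notin: "u \<notin> e \<Longrightarrow> rig_row p e u i = 0"
  by (simp add: rig_row_def)

definition is_cycle :: "'a list \<Rightarrow> bool" where
  "is_cycle cs \<longleftrightarrow> distinct cs \<and> 3 \<le> length cs"

definition cyc_walk :: "'a list \<Rightarrow> nat \<Rightarrow> 'a" where
  "cyc_walk cs t = cs ! (t mod length cs)"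

definition cyc_edges :: "'a list \<Rightarrow> 'a set set" where
  "cyc_edges cs = (\<lambda>t. {cyc_walk cs t, cyc_walk cs (Suc t)}) ` {..<length cs}"

lemma cyc_walk_add_length [simp]: "cyc_walk cs (t + length cs) = cyc_walk cs t"
  by (simp add: cyc_walk_def)

lemma is_cycle_length_pos: "is_cycle cs \<Longrightarrow> 0 < length cs"
  unfolding is_cycle_def by (elim conjE) linarith

lemma cyc_walk_eq_iff:
  assumes "is_cycle cs"
  shows "cyc_walk cs s = cyc_walk cs t \<longleftrightarrow> s mod length cs = t mod length cs"
  using nth_eq_iff_index_eq[of cs "s mod length cs" "t mod length cs"] assms is_cycle_length_pos[OF assms]
  by (simp add: cyc_walk_def is_cycle_def)

lemma cyc_walk_inj:
  assumes "is_cycle cs" "s < length cs" "t < length cs"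
  shows "cyc_walk cs s = cyc_walk cs t \<longleftrightarrow> s = t"
  using assms by (simp add: cyc_walk_eq_iff)

lemma cyc_walk_in_set: "is_cycle cs \<Longrightarrow> cyc_walk cs t \<in> set cs"
  unfolding cyc_walk_def by (rule nth_mem[OF mod_less_divisor[OF is_cycle_length_pos]])

lemma cyc_walk_surj:
  assumes "is_cycle cs" "u \<in> set cs"
  obtains i where "i < length cs" "cyc_walk cs i = u"
  using assms that by (auto simp: cyc_walk_def in_set_conv_nth)

lemma cyc_walk_Suc_neq: "is_cycle cs \<Longrightarrow> cyc_walk cs (Suc t) \<noteq> cyc_walk cs t"
  by (simp add: cyc_walk_eq_iff mod_Suc is_cycle_def)

lemma cyc_walk_edge: "is_cycle cs \<Longrightarrow> {cyc_walk cs t, cyc_walk cs (Suc t)} \<in> cyc_edges cs"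
  unfolding cyc_edges_def using is_cycle_length_pos[of cs]
  by (intro image_eqI[of _ _ "t mod length cs"]) (auto simp: cyc_walk_def mod_Suc_eq)

lemma Suc_mod_less: "t < n \<Longrightarrow> Suc t mod n = (if Suc t = n then 0 else Suc t)"
  by (cases "Suc t = n") auto

lemma cyc_edges_neighbour:
  assumes cyc: "is_cycle cs" and edge: "{cyc_walk cs i, c} \<in> cyc_edges cs"
  shows "c = cyc_walk cs (Suc i) \<or> c = cyc_walk cs (i + (length cs - 1))"
proof -
  let ?n = "length cs" and ?w = "cyc_walk cs"
  from edge obtain t where "{?w i, c} = {?w t, ?w (Suc t)}"
    unfolding cyc_edges_def by (rule imageE)
  then consider "?w i = ?w t" "c = ?w (Suc t)" | "?w i = ?w (Suc t)" "c = ?w t"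
    by (auto simp: doubleton_eq_iff)
  then show ?thesis
  proof cases
    case 1
    then have "i mod ?n = t mod ?n" using cyc by (simp add: cyc_walk_eq_iff)
    then have "Suc i mod ?n = Suc t mod ?n" by (metis mod_Suc_eq)
    then show ?thesis using 1 cyc by (simp add: cyc_walk_eq_iff)
  next
    case 2
    then have "i mod ?n = Suc t mod ?n" using cyc by (simp add: cyc_walk_eq_iff)
    then have "(i + (?n - 1)) mod ?n = (Suc t + (?n - 1)) mod ?n" by (metis mod_add_left_eq)
    also have "Suc t + (?n - 1) = t + ?n" using is_cycle_length_pos[OF cyc] by simp
    finally have "(i + (?n - 1)) mod ?n = t mod ?n" by simp
    then show ?thesis using 2 cyc by (simp add: cyc_walk_eq_iff)
  qed
qed

lemma cyc_edges_vertex: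
  assumes "is_cycle cs" "e \<in> cyc_edges cs" "u \<in> e"
  shows "u \<in> set cs"
proof -
  from assms(2) obtain t where "e = {cyc_walk cs t, cyc_walk cs (Suc t)}"
    unfolding cyc_edges_def by (rule imageE)
  then show ?thesis using assms(3) cyc_walk_in_set[OF assms(1)] by auto
qed

lemma cyc_edges_index_inj:
  assumes cyc: "is_cycle cs" and st: "s < length cs" "t < length cs"
    and eq: "{cyc_walk cs s, cyc_walk cs (Suc s)} = {cyc_walk cs t, cyc_walk cs (Suc t)}"
  shows "s = t"
proof (rule ccontr)
  let ?n = "length cs"
  assume "s \<noteq> t"
  then have "cyc_walk cs s = cyc_walk cs (Suc t)" "cyc_walk cs (Suc s) = cyc_walk cs t"
    using eq st cyc by (auto simp: doubleton_eq_iff cyc_walk_inj)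
  then have "s = Suc t mod ?n" "t = Suc s mod ?n"
    using st cyc by (simp_all add: cyc_walk_eq_iff)
  moreover have "3 \<le> ?n" using cyc by (simp add: is_cycle_def)
  ultimately show False
    using st by (simp add: Suc_mod_less split: if_splits)
qed

lemma gen_p1_inj:
  assumes "finite V" "u \<in> V" "w \<in> V" "u \<noteq> w"
  shows "gen_p 1 V u 0 \<noteq> gen_p 1 V w 0"
proof -
  define f where "f p = p u 0 - p w 0" for p :: "_ \<Rightarrow> nat \<Rightarrow> real"
  have "rat_polyfun (V \<times> {..<1}) (\<lambda>z. f (curry z))"
    unfolding f_def using assms by (intro rat_polyfun_diff rat_polyfun_coord) auto
  moreover have "f (\<lambda>a i. if a = u then 1 else 0) \<noteq> 0"
    using assms(4) by (simp add: f_def)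
  ultimately have "f (gen_p 1 V) \<noteq> 0" by (rule gen_p_nonzero[OF assms(1)])
  then show ?thesis by (simp add: f_def)
qed

lemma rig_row_scaled:
  assumes "a \<noteq> b" "p a 0 \<noteq> p b 0"
  shows "1 / (p a 0 - p b 0) * rig_row p {a, b} u 0 = (if u = a then 1 else 0) - (if u = b then 1 else 0)"
proof -
  have "rig_row p {a, b} b 0 = p b 0 - p a 0"
    using rig_row_doubleton[of b a p 0] assms(1) by (simp add: insert_commute)
  then show ?thesis
    using assms by (auto simp: rig_row_doubleton rig_row_notin divide_eq_minus_1_iff)
qed

lemma cycle_R1_dependent:
  assumes finV: "finite V" and cyc: "is_cycle cs" and csV: "set cs \<subseteq> V"
  shows "\<not> Rindep 1 V (cyc_edges cs)"
proof
  assume indep: "Rindep 1 V (cyc_edges cs)"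
  let ?p = "gen_p 1 V" and ?n = "length cs" and ?w = "cyc_walk cs"
  define edge where "edge t = {?w t, ?w (Suc t)}" for t
  define coeff where "coeff t = 1 / (?p (?w t) 0 - ?p (?w (Suc t)) 0)" for t
  have inj: "inj_on edge {..<?n}"
    using cyc_edges_index_inj[OF cyc] by (intro inj_onI) (auto simp: edge_def)
  have edges: "cyc_edges cs = edge ` {..<?n}" by (simp add: cyc_edges_def edge_def)
  have distinct_coords: "?p (?w t) 0 \<noteq> ?p (?w (Suc t)) 0" for t
  proof -
    have "?w t \<in> V" "?w (Suc t) \<in> V" using cyc_walk_in_set[OF cyc] csV by auto
    then show ?thesis using gen_p1_inj[OF finV] cyc_walk_Suc_neq[OF cyc, of t] by simp
  qed
  define c where "c = coeff \<circ> the_inv_into {..<?n} edge"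
  have c_edge: "c (edge t) = coeff t" if "t < ?n" for t
    using that by (simp add: c_def the_inv_into_f_f[OF inj])
  have "(\<Sum>e\<in>cyc_edges cs. c e * rig_row ?p e u i) = 0" if "u \<in> V" "i < 1" for u i
  proof -
    define hit where "hit t = (if u = ?w t then 1 else 0 :: real)" for t
    have "(\<Sum>e\<in>cyc_edges cs. c e * rig_row ?p e u i) = (\<Sum>t<?n. coeff t * rig_row ?p (edge t) u 0)"
      using that unfolding edges by (simp add: sum.reindex[OF inj] c_edge)
    also have "\<dots> = (\<Sum>t<?n. hit t - hit (Suc t))"
    proof (rule sum.cong[OF refl])
      fix t
      show "coeff t * rig_row ?p (edge t) u 0 = hit t - hit (Suc t)"
        unfolding coeff_def edge_def hit_def
        by (rule rig_row_scaled) (use cyc_walk_Suc_neq[OF cyc, of t] distinct_coords[of t] in auto)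
    qed
    also have "\<dots> = hit 0 - hit ?n"
      by (rule sum_lessThan_telescope')
    also have "\<dots> = 0" using cyc_walk_add_length[of cs 0] by (simp add: hit_def)
    finally show ?thesis .
  qed
  moreover have "edge 0 \<in> cyc_edges cs" "c (edge 0) \<noteq> 0"
    using is_cycle_length_pos[OF cyc] distinct_coords[of 0] by (auto simp: edges c_edge coeff_def)
  ultimately show False
    using rows_indepD[of 1 V ?p "cyc_edges cs" c] indep by (simp add: Rindep_def)
qed

lemma set_subset_cyc_edges: "is_cycle cs \<Longrightarrow> set cs \<subseteq> \<Union>(cyc_edges cs)"
proof
  fix u assume "is_cycle cs" "u \<in> set cs"
  then obtain i where "cyc_walk cs i = u" by (rule cyc_walk_surj)
  then show "u \<in> \<Union>(cyc_edges cs)" using cyc_walk_edge[OF \<open>is_cycle cs\<close>, of i] by blast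
qed

definition is_path :: "'a set set \<Rightarrow> 'a list \<Rightarrow> bool" where
  "is_path Z ws \<longleftrightarrow> distinct ws \<and> (\<forall>i. Suc i < length ws \<longrightarrow> {ws ! i, ws ! Suc i} \<in> Z)"

lemma is_path_snoc:
  assumes "is_path Z ws" "ws \<noteq> []" "z \<notin> set ws" "{last ws, z} \<in> Z"
  shows "is_path Z (ws @ [z])"
  unfolding is_path_def
proof (intro conjI allI impI)
  show "distinct (ws @ [z])" using assms(1,3) by (simp add: is_path_def)
  fix i assume i: "Suc i < length (ws @ [z])"
  show "{(ws @ [z]) ! i, (ws @ [z]) ! Suc i} \<in> Z"
  proof (cases "Suc i < length ws")
    case True
    then show ?thesis using assms(1) by (simp add: is_path_def nth_append)
  next
    case False
    then have "i = length ws - 1" using i by simp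
    then show ?thesis using assms(2,4) by (simp add: nth_append last_conv_nth)
  qed
qed

lemma is_path_close:
  assumes path: "is_path Z ws" and j: "j + 3 \<le> length ws" and closing: "{last ws, ws ! j} \<in> Z"
  shows "is_cycle (drop j ws)" "cyc_edges (drop j ws) \<subseteq> Z"
proof -
  let ?cs = "drop j ws" and ?m = "length ws"
  show cyc: "is_cycle ?cs" using path j by (simp add: is_cycle_def is_path_def)
  have walk: "cyc_walk ?cs t = ws ! (j + t)" if "t < length ?cs" for t
    using that by (simp add: cyc_walk_def)
  show "cyc_edges ?cs \<subseteq> Z"
  proof
    fix e assume "e \<in> cyc_edges ?cs"
    then obtain t where t: "t < length ?cs" "e = {cyc_walk ?cs t, cyc_walk ?cs (Suc t)}"
      unfolding cyc_edges_def by blast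
    show "e \<in> Z"
    proof (cases "Suc t < length ?cs")
      case True
      then show ?thesis using path t by (simp add: walk is_path_def)
    next
      case False
      then have "Suc t = length ?cs" using t(1) by simp
      then have "j + t = ?m - 1" "ws \<noteq> []" using j by auto
      then have "cyc_walk ?cs t = last ws" "cyc_walk ?cs (Suc t) = ws ! j"
        using t(1) \<open>Suc t = length ?cs\<close> by (simp_all add: walk last_conv_nth cyc_walk_def)
      then show ?thesis using t(2) closing by simp
    qed
  qed
qed

lemma longest_path_exists:
  assumes finZ: "finite Z" and e0: "e0 \<in> Z" and edges: "\<forall>e\<in>Z. \<exists>a b. a \<noteq> b \<and> e = {a, b}"
  obtains ws where "is_path Z ws" "set ws \<subseteq> \<Union>Z" "2 \<le> length ws"
    "\<forall>ws'. is_path Z ws' \<and> set ws' \<subseteq> \<Union>Z \<and> 2 \<le> length ws' \<longrightarrow> length ws' \<le> length ws"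
proof -
  define P where "P = {ws. is_path Z ws \<and> set ws \<subseteq> \<Union>Z \<and> 2 \<le> length ws}"
  have finU: "finite (\<Union>Z)" by (rule finite_Union[OF finZ]) (use edges in auto)
  have "P \<subseteq> {ws. set ws \<subseteq> \<Union>Z \<and> length ws \<le> card (\<Union>Z)}"
  proof
    fix ws assume "ws \<in> P"
    then have "distinct ws" "set ws \<subseteq> \<Union>Z" by (simp_all add: P_def is_path_def)
    then show "ws \<in> {ws. set ws \<subseteq> \<Union>Z \<and> length ws \<le> card (\<Union>Z)}"
      using card_mono[OF finU \<open>set ws \<subseteq> \<Union>Z\<close>] distinct_card[of ws] by simp
  qed
  then have finP: "finite P" using finite_lists_length_le[OF finU] by (rule finite_subset)
  obtain a0 b0 where "a0 \<noteq> b0" "e0 = {a0, b0}" using edges e0 by blast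
  then have "[a0, b0] \<in> P" using e0 by (auto simp: P_def is_path_def less_Suc_eq)
  then have "Max (length ` P) \<in> length ` P" using finP by (intro Max_in) auto
  then obtain ws where ws: "ws \<in> P" "Max (length ` P) = length ws" by (rule imageE)
  have "\<forall>ws'. ws' \<in> P \<longrightarrow> length ws' \<le> length ws"
    using Max_ge[of "length ` P"] finP ws(2) by auto
  with ws(1) show ?thesis using that unfolding P_def by blast
qed

lemma is_path_last_edge:
  assumes "is_path Z ws" "2 \<le> length ws"
  shows "{ws ! (length ws - 2), last ws} \<in> Z"
proof -
  have "ws \<noteq> []" using assms(2) by (cases ws) auto
  moreover have "Suc (length ws - 2) < length ws" "Suc (length ws - 2) = length ws - 1" using assms(2) by auto
  ultimately show ?thesis using assms(1) unfolding is_path_def by (metis last_conv_nth)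
qed

lemma cycle_if_min_degree:
  assumes finZ: "finite Z" and e0: "e0 \<in> Z" and edges: "\<forall>e\<in>Z. \<exists>a b. a \<noteq> b \<and> e = {a, b}"
    and deg: "\<forall>e\<in>Z. \<forall>u\<in>e. \<exists>e'\<in>Z. e' \<noteq> e \<and> u \<in> e'"
  shows "\<exists>cs. is_cycle cs \<and> cyc_edges cs \<subseteq> Z"
proof -
  obtain ws where path: "is_path Z ws" and wsU: "set ws \<subseteq> \<Union>Z" and m2: "2 \<le> length ws"
    and longest: "\<forall>ws'. is_path Z ws' \<and> set ws' \<subseteq> \<Union>Z \<and> 2 \<le> length ws' \<longrightarrow> length ws' \<le> length ws"
    by (rule longest_path_exists[OF finZ e0 edges])
  let ?m = "length ws"
  define z where "z = last ws"
  define w where "w = ws ! (?m - 2)"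
  have "ws \<noteq> []" using m2 by (cases ws) auto
  then have z_nth: "z = ws ! (?m - 1)" by (simp add: z_def last_conv_nth)
  have "{w, z} \<in> Z" unfolding w_def z_def by (rule is_path_last_edge[OF path m2])
  then obtain e' where e': "e' \<in> Z" "e' \<noteq> {w, z}" "z \<in> e'" using deg by blast
  obtain a b where "a \<noteq> b" "e' = {a, b}" using edges e'(1) by blast
  define z' where "z' = (if a = z then b else a)"
  have e'z: "e' = {z, z'}" "z' \<noteq> z" "z' \<noteq> w"
    using \<open>a \<noteq> b\<close> \<open>e' = {a, b}\<close> e'(2,3) by (auto simp: z'_def)
  show ?thesis
  proof (cases "z' \<in> set ws")
    case False
    have "is_path Z (ws @ [z'])"
      using is_path_snoc[OF path \<open>ws \<noteq> []\<close> False] e'(1) e'z(1) by (simp add: z_def)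
    then show ?thesis using longest[rule_format, of "ws @ [z']"] wsU e' e'z m2 by auto
  next
    case True
    then obtain j where j: "j < ?m" "ws ! j = z'" by (auto simp: in_set_conv_nth)
    have "j \<noteq> ?m - 1" "j \<noteq> ?m - 2"
      using j e'z(2,3) by (auto simp: z_nth w_def)
    then have "j + 3 \<le> ?m" using j(1) m2 by linarith
    moreover have "{last ws, ws ! j} \<in> Z" using e' e'z j by (simp add: z_def)
    ultimately show ?thesis using is_path_close[OF path] by blast
  qed
qed

lemma Rcircuit_dependency:
  assumes "Rcircuit d V Z"
  shows "\<exists>c. (\<forall>u\<in>V. \<forall>i<d. (\<Sum>e\<in>Z. c e * rig_row (gen_p d V) e u i) = 0) \<and> (\<forall>e\<in>Z. c e \<noteq> 0)"
proof -
  let ?p = "gen_p d V"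
  have finZ: "finite Z" and dep: "\<not> rows_indep d V ?p Z" and minimal: "\<And>S. S \<subset> Z \<Longrightarrow> Rindep d V S"
    using assms by (auto simp: Rcircuit_def Rindep_def)
  obtain c where c: "\<forall>u\<in>V. \<forall>i<d. (\<Sum>e\<in>Z. c e * rig_row ?p e u i) = 0" and "\<exists>e\<in>Z. c e \<noteq> 0"
    using dep unfolding rows_indep_def by auto
  define Z' where "Z' = {e\<in>Z. c e \<noteq> 0}"
  have "(\<Sum>e\<in>Z'. c e * rig_row ?p e u i) = (\<Sum>e\<in>Z. c e * rig_row ?p e u i)" for u i
    unfolding Z'_def using finZ by (intro sum.mono_neutral_left) auto
  then have "\<not> rows_indep d V ?p Z'"
    using rows_indepD[of d V ?p Z' c] c \<open>\<exists>e\<in>Z. c e \<noteq> 0\<close> by (auto simp: Z'_def)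
  then have "\<not> Z' \<subset> Z" using minimal by (auto simp: Rindep_def)
  then have "c e \<noteq> 0" if "e \<in> Z" for e using that by (auto simp: Z'_def)
  then show ?thesis using c by blast
qed

lemma R1_circuit_min_degree:
  assumes finV: "finite V" and edges: "\<forall>e\<in>Z. \<exists>a b. a \<in> V \<and> b \<in> V \<and> a \<noteq> b \<and> e = {a, b}"
    and circ: "Rcircuit 1 V Z" and e: "e \<in> Z" and u: "u \<in> e"
  shows "\<exists>e'\<in>Z. e' \<noteq> e \<and> u \<in> e'"
proof (rule ccontr)
  let ?p = "gen_p 1 V"
  assume alone: "\<not> (\<exists>e'\<in>Z. e' \<noteq> e \<and> u \<in> e')"
  obtain c where c: "\<forall>u\<in>V. \<forall>i<1. (\<Sum>e\<in>Z. c e * rig_row ?p e u i) = 0" "\<forall>e\<in>Z. c e \<noteq> 0"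
    using Rcircuit_dependency[OF circ] by blast
  obtain a b where ab: "a \<in> V" "b \<in> V" "a \<noteq> b" "e = {a, b}" using edges e by blast
  define w where "w = (if u = a then b else a)"
  have ew: "e = {u, w}" "u \<noteq> w" "u \<in> V" "w \<in> V" using ab u by (auto simp: w_def)
  have finZ: "finite Z" using circ by (simp add: Rcircuit_def)
  have "(\<Sum>e'\<in>Z. c e' * rig_row ?p e' u 0) = c e * rig_row ?p e u 0 + (\<Sum>e'\<in>Z - {e}. c e' * rig_row ?p e' u 0)"
    by (rule sum.remove[OF finZ e])
  also have "(\<Sum>e'\<in>Z - {e}. c e' * rig_row ?p e' u 0) = 0"
    using alone by (intro sum.neutral) (auto simp: rig_row_notin)
  finally have "c e * (?p u 0 - ?p w 0) = 0"
    using c(1) ew(3) by (simp add: ew(1) rig_row_doubleton[OF ew(2)])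
  then show False using c(2) e gen_p1_inj[OF finV ew(3,4,2)] by simp
qed

lemma R1_circuit_is_cycle:
  assumes finV: "finite V" and edges: "\<forall>e\<in>Z. \<exists>a b. a \<in> V \<and> b \<in> V \<and> a \<noteq> b \<and> e = {a, b}"
    and circ: "Rcircuit 1 V Z"
  obtains cs where "is_cycle cs" "set cs \<subseteq> V" "cyc_edges cs = Z"
proof -
  have finZ: "finite Z" and minimal: "\<And>S. S \<subset> Z \<Longrightarrow> Rindep 1 V S" using circ by (auto simp: Rcircuit_def)
  have "Z \<noteq> {}" using circ Rindep_empty[of 1 V] by (auto simp: Rcircuit_def)
  then obtain e0 where e0: "e0 \<in> Z" by blast
  have two: "\<forall>e\<in>Z. \<exists>a b. a \<noteq> b \<and> e = {a, b}"
  proof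
    fix e assume "e \<in> Z"
    then obtain a b where "a \<noteq> b" "e = {a, b}" using edges by blast
    then show "\<exists>a b. a \<noteq> b \<and> e = {a, b}" by blast
  qed
  have "\<forall>e\<in>Z. \<forall>u\<in>e. \<exists>e'\<in>Z. e' \<noteq> e \<and> u \<in> e'"
    using R1_circuit_min_degree[OF finV edges circ] by simp
  then obtain cs where cs: "is_cycle cs" "cyc_edges cs \<subseteq> Z"
    using cycle_if_min_degree[OF finZ e0 two] by auto
  have "\<Union>Z \<subseteq> V"
  proof
    fix u assume "u \<in> \<Union>Z"
    then obtain e where "e \<in> Z" "u \<in> e" by blast
    then obtain a b where "a \<in> V" "b \<in> V" "e = {a, b}" using edges by blast
    then show "u \<in> V" using \<open>u \<in> e\<close> by auto
  qed
  moreover have "\<Union>(cyc_edges cs) \<subseteq> \<Union>Z" using cs(2) by (rule Union_mono)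
  ultimately have csV: "set cs \<subseteq> V" using set_subset_cyc_edges[OF cs(1)] by (meson subset_trans)
  have "cyc_edges cs = Z"
  proof (rule ccontr)
    assume "cyc_edges cs \<noteq> Z"
    then have "Rindep 1 V (cyc_edges cs)" using cs(2) by (intro minimal) auto
    then show False using cycle_R1_dependent[OF finV cs(1) csV] by contradiction
  qed
  with cs(1) csV show ?thesis by (rule that)
qed

lemma cyc_walk_shift_inj:
  assumes cyc: "is_cycle cs" and "s < length cs" "t < length cs"
  shows "cyc_walk cs (i + s) = cyc_walk cs (i + t) \<longleftrightarrow> s = t"
proof
  let ?n = "length cs"
  have key: "s = t" if "s \<le> t" "t < ?n" "(i + s) mod ?n = (i + t) mod ?n" for s t
  proof -
    have dvd: "?n dvd t - s" using that mod_eq_dvd_iff_nat[of "i + s" "i + t" ?n] by simp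
    show ?thesis
    proof (rule ccontr)
      assume "s \<noteq> t"
      then have "0 < t - s" "t - s < ?n" using that by auto
      then show False using nat_dvd_not_less dvd by blast
    qed
  qed
  assume "cyc_walk cs (i + s) = cyc_walk cs (i + t)"
  then have "(i + s) mod ?n = (i + t) mod ?n" using cyc by (simp add: cyc_walk_eq_iff)
  then show "s = t" using key[of s t] key[of t s] assms(2,3) by linarith
qed simp

lemma cyc_walk_surj_from:
  assumes cyc: "is_cycle cs" and "u \<in> set cs"
  obtains j where "j < length cs" "cyc_walk cs (i + j) = u"
proof -
  let ?n = "length cs"
  obtain j0 where j0: "j0 < ?n" "cyc_walk cs j0 = u" using cyc_walk_surj[OF assms] .
  define j where "j = (j0 + (?n - i mod ?n)) mod ?n"
  have n0: "0 < ?n" using is_cycle_length_pos[OF cyc] .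
  have "(i + j) mod ?n = (i mod ?n + (j0 + (?n - i mod ?n))) mod ?n"
    unfolding j_def by (simp add: mod_add_left_eq mod_add_right_eq)
  also have "i mod ?n + (j0 + (?n - i mod ?n)) = j0 + ?n"
    using mod_less_divisor[OF n0, of i] by linarith
  finally have "cyc_walk cs (i + j) = cyc_walk cs j0" by (simp add: cyc_walk_def)
  moreover have "j < ?n" using n0 by (simp add: j_def)
  ultimately show ?thesis using that j0(2) by simp
qed

lemma cyc_walk_pred_edge:
  assumes "is_cycle cs"
  shows "{cyc_walk cs i, cyc_walk cs (i + (length cs - 1))} \<in> cyc_edges cs"
proof -
  have eq: "Suc (i + (length cs - 1)) = i + length cs" using is_cycle_length_pos[OF assms] by simp
  have "{cyc_walk cs (i + (length cs - 1)), cyc_walk cs (Suc (i + (length cs - 1)))} \<in> cyc_edges cs"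
    by (rule cyc_walk_edge[OF assms])
  then have "{cyc_walk cs (i + (length cs - 1)), cyc_walk cs i} \<in> cyc_edges cs"
    unfolding eq cyc_walk_add_length .
  then show ?thesis by (simp only: insert_commute)
qed

definition cycle_pair_at :: "'a set set \<Rightarrow> 'a set \<Rightarrow> 'a \<Rightarrow> bool" where
  "cycle_pair_at E V x \<longleftrightarrow> (\<exists>cs1 cs2 b.
     is_cycle cs1 \<and> set cs1 \<subseteq> V \<and> cyc_edges cs1 \<subseteq> E \<and> x \<in> set cs1 \<and>
     is_cycle cs2 \<and> set cs2 \<subseteq> V \<and> cyc_edges cs2 \<subseteq> E \<and> {x, b} \<in> cyc_edges cs2 \<and> {x, b} \<notin> cyc_edges cs1)"

section \<open>Stretch and turn of the spokes of a cone\<close>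

definition route_ends :: "'a \<Rightarrow> 'a \<Rightarrow> 'a set \<Rightarrow> 'a \<Rightarrow> 'a \<Rightarrow> bool" where
  "route_ends x y W a b \<longleftrightarrow> (a = y \<and> b = x) \<or> (a \<in> W - {x, y} \<and> b \<in> W - {x, y})"

definition disjoint_routes :: "'a \<Rightarrow> 'a \<Rightarrow> 'a \<Rightarrow> 'a \<Rightarrow> 'a \<Rightarrow> bool" where
  "disjoint_routes y a b a' b' \<longleftrightarrow> a \<noteq> a' \<and> b \<noteq> b' \<and> (a \<noteq> y \<longrightarrow> a' \<noteq> y \<longrightarrow> {a, b} \<inter> {a', b'} = {})"

definition route_det :: "('a \<Rightarrow> 'a \<Rightarrow> real) \<Rightarrow> 'a \<Rightarrow> 'a \<Rightarrow> 'a \<Rightarrow> 'a \<Rightarrow> 'a \<Rightarrow> 'a \<Rightarrow> 'a \<Rightarrow> 'a \<Rightarrow> real" where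
  "route_det \<tau> x y a1 b1 a2 b2 a3 b3 =
     (\<tau> x a1 - \<tau> x a2) * (\<tau> y b1 - \<tau> y b3) - (\<tau> x a1 - \<tau> x a3) * (\<tau> y b1 - \<tau> y b2)"

text \<open>For a motion \<open>q\<close> of the cone with apex \<open>v\<close>, write \<open>q u - q v = stretch u (p u - p v) + turn u J (p u - p v)\<close>
  with \<open>J\<close> the rotation by a right angle. The spoke \<open>vu\<close> is respected iff \<open>stretch u = 0\<close>, and
  \<open>edge_eq\<close> is the condition for the edge \<open>uw\<close> of the base graph. Only the spokes at \<open>x\<close>
  and \<open>y\<close> are not required to be respected.\<close>

locale spoke_coords =
  fixes E :: "'a set set" and V :: "'a set" and x y :: 'a
    and turn stretch :: "'a \<Rightarrow> real" and \<tau> :: "'a \<Rightarrow> 'a \<Rightarrow> real"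
  assumes edge_eq: "\<And>u w. {u, w} \<in> E \<Longrightarrow> u \<noteq> w \<Longrightarrow> turn u - turn w = stretch u * \<tau> u w - stretch w * \<tau> w u"
    and stretch_zero: "\<And>u. u \<in> V \<Longrightarrow> u \<noteq> x \<Longrightarrow> u \<noteq> y \<Longrightarrow> stretch u = 0"
    and \<tau>_inj: "\<And>a b. a \<in> V \<Longrightarrow> b \<in> V \<Longrightarrow> a \<noteq> x \<Longrightarrow> b \<noteq> x \<Longrightarrow> a \<noteq> b \<Longrightarrow> \<tau> x a \<noteq> \<tau> x b"
    and route_det_nonzero: "\<And>a1 b1 a2 b2 a3 b3.
      route_ends x y V a1 b1 \<Longrightarrow> route_ends x y V a2 b2 \<Longrightarrow> route_ends x y V a3 b3 \<Longrightarrow>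
      disjoint_routes y a1 b1 a2 b2 \<Longrightarrow> disjoint_routes y a1 b1 a3 b3 \<Longrightarrow> disjoint_routes y a2 b2 a3 b3 \<Longrightarrow>
      route_det \<tau> x y a1 b1 a2 b2 a3 b3 \<noteq> 0"
    and x_in_V: "x \<in> V" and y_in_V: "y \<in> V" and x_neq_y: "x \<noteq> y"
begin

definition inner_edge :: "'a \<Rightarrow> 'a \<Rightarrow> bool" where
  "inner_edge u w \<longleftrightarrow> {u, w} \<in> E \<and> u \<noteq> w \<and> u \<in> V - {x, y} \<and> w \<in> V - {x, y}"

abbreviation linked :: "'a \<Rightarrow> 'a \<Rightarrow> bool" where
  "linked \<equiv> inner_edge\<^sup>*\<^sup>*"

lemma linked_sym: "linked u w \<Longrightarrow> linked w u"
proof (induction rule: rtranclp_induct)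
  case (step w w')
  then have "inner_edge w' w" by (auto simp: inner_edge_def insert_commute)
  then show ?case using step.IH by (rule converse_rtranclp_into_rtranclp)
qed simp

lemma linked_inner:
  assumes "linked a b" "a \<noteq> b"
  shows "a \<in> V - {x, y}" "b \<in> V - {x, y}"
proof -
  from assms obtain a' where "inner_edge a a'" by (blast elim: converse_rtranclpE)
  then show "a \<in> V - {x, y}" by (simp add: inner_edge_def)
  from assms obtain b' where "inner_edge b' b" by (blast elim: rtranclp.cases)
  then show "b \<in> V - {x, y}" by (simp add: inner_edge_def)
qed

lemma turn_eq_if_linked: "linked u w \<Longrightarrow> turn u = turn w"
proof (induction rule: rtranclp_induct)
  case (step w w')
  then show ?case using edge_eq[of w w'] stretch_zero by (auto simp: inner_edge_def)
qed simp

lemma turn_x: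
  assumes "{x, a} \<in> E" "a \<in> V - {x, y}"
  shows "turn x - turn a = stretch x * \<tau> x a"
  using edge_eq[OF assms(1)] stretch_zero[of a] assms(2) by auto

lemma stretch_x_zero_if_linked:
  assumes "{x, a} \<in> E" "{x, b} \<in> E" "a \<noteq> b" "linked a b"
  shows "stretch x = 0"
proof -
  have ab: "a \<in> V - {x, y}" "b \<in> V - {x, y}" using linked_inner[OF assms(4,3)] by auto
  have "stretch x * \<tau> x a = turn x - turn a" using turn_x[OF assms(1) ab(1)] by simp
  also have "\<dots> = turn x - turn b" using turn_eq_if_linked[OF assms(4)] by simp
  also have "\<dots> = stretch x * \<tau> x b" using turn_x[OF assms(2) ab(2)] by simp
  finally have "stretch x * (\<tau> x a - \<tau> x b) = 0" by (simp add: right_diff_distrib)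
  moreover have "\<tau> x a \<noteq> \<tau> x b" using \<tau>_inj ab assms(3) by auto
  ultimately show ?thesis by simp
qed

text \<open>\<open>route a b\<close>: an \<open>x\<close>--\<open>y\<close> path whose first and last inner vertices are \<open>a\<close> and \<open>b\<close>
  (by convention \<open>a = y\<close> and \<open>b = x\<close> for the edge \<open>xy\<close> itself).\<close>

definition route :: "'a \<Rightarrow> 'a \<Rightarrow> bool" where
  "route a b \<longleftrightarrow> (a = y \<and> b = x \<and> {x, y} \<in> E) \<or>
     ({x, a} \<in> E \<and> {b, y} \<in> E \<and> a \<in> V - {x, y} \<and> b \<in> V - {x, y} \<and> linked a b)"

lemma route_turn:
  assumes "route a b"
  shows "turn x - turn y = stretch x * \<tau> x a - stretch y * \<tau> y b"
  using assms unfolding route_def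
proof (elim disjE conjE)
  assume a: "{x, a} \<in> E" "a \<in> V - {x, y}" and b: "{b, y} \<in> E" "b \<in> V - {x, y}" and "linked a b"
  have "turn x - turn a = stretch x * \<tau> x a" using turn_x[OF a] .
  moreover have "turn a = turn b" using turn_eq_if_linked[OF \<open>linked a b\<close>] .
  moreover have "{y, b} \<in> E" using b(1) by (simp add: insert_commute)
  then have "turn y - turn b = stretch y * \<tau> y b"
    using edge_eq[of y b] stretch_zero[of b] b(2) by auto
  ultimately show ?thesis by simp
qed (use edge_eq[of x y] x_neq_y in simp)

lemma route_route_ends: "route a b \<Longrightarrow> route_ends x y V a b"
  by (auto simp: route_def route_ends_def)

lemma stretch_x_zero_or_disjoint:
  assumes r: "route a b" and r': "route a' b'" and "a \<noteq> a'"
  shows "stretch x = 0 \<or> disjoint_routes y a b a' b'"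
proof (cases "a \<noteq> y \<and> a' \<noteq> y \<and> linked a a'")
  case True
  then show ?thesis using r r' \<open>a \<noteq> a'\<close> stretch_x_zero_if_linked[of a a'] by (auto simp: route_def)
next
  case unlinked: False
  consider "a = y" "b = x" "a' \<noteq> y" "linked a' b'" "b' \<noteq> x" | "a' = y" "b' = x" "a \<noteq> y" "linked a b" "b \<noteq> x"
    | "a \<noteq> y" "a' \<noteq> y" "linked a b" "linked a' b'"
    using r r' \<open>a \<noteq> a'\<close> by (auto simp: route_def)
  then show ?thesis
  proof cases
    case 3
    have "\<not> linked a a'" using unlinked 3 by simp
    then have "{a, b} \<inter> {a', b'} = {}" "b \<noteq> b'"
      using 3 linked_sym by (auto intro: rtranclp_trans)
    then show ?thesis using \<open>a \<noteq> a'\<close> by (simp add: disjoint_routes_def)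
  qed (use \<open>a \<noteq> a'\<close> in \<open>auto simp: disjoint_routes_def\<close>)
qed

lemma three_routes:
  assumes r1: "route a1 b1" and r2: "route a2 b2" and r3: "route a3 b3"
    and "a1 \<noteq> a2" "a1 \<noteq> a3" "a2 \<noteq> a3"
  shows "stretch x = 0"
proof (rule ccontr)
  assume "stretch x \<noteq> 0"
  then have "disjoint_routes y a1 b1 a2 b2" "disjoint_routes y a1 b1 a3 b3" "disjoint_routes y a2 b2 a3 b3"
    using stretch_x_zero_or_disjoint assms by blast+
  then have det: "route_det \<tau> x y a1 b1 a2 b2 a3 b3 \<noteq> 0"
    using route_det_nonzero route_route_ends r1 r2 r3 by blast
  have eq2: "stretch x * (\<tau> x a1 - \<tau> x a2) = stretch y * (\<tau> y b1 - \<tau> y b2)"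
    and eq3: "stretch x * (\<tau> x a1 - \<tau> x a3) = stretch y * (\<tau> y b1 - \<tau> y b3)"
    using route_turn[OF r1] route_turn[OF r2] route_turn[OF r3] by (simp_all add: algebra_simps)
  have "stretch x * route_det \<tau> x y a1 b1 a2 b2 a3 b3 =
      stretch x * (\<tau> x a1 - \<tau> x a2) * (\<tau> y b1 - \<tau> y b3) - stretch x * (\<tau> x a1 - \<tau> x a3) * (\<tau> y b1 - \<tau> y b2)"
    unfolding route_det_def by (simp add: algebra_simps)
  also have "\<dots> = 0" unfolding eq2 eq3 by (simp add: algebra_simps)
  finally have "stretch x * route_det \<tau> x y a1 b1 a2 b2 a3 b3 = 0" .
  with det \<open>stretch x \<noteq> 0\<close> show False by simp
qed

end

context spoke_coords
begin

lemma cycle_inner_vertex: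
  assumes "is_cycle cs" "set cs \<subseteq> V" "cyc_walk cs i = x"
    and "0 < k" "k < length cs" "cyc_walk cs (i + k) \<noteq> y"
  shows "cyc_walk cs (i + k) \<in> V - {x, y}"
proof -
  have "0 < length cs" using assms(5) by linarith
  then have "cyc_walk cs (i + k) \<noteq> cyc_walk cs (i + 0)"
    using cyc_walk_shift_inj[OF assms(1,5), of 0 i] assms(4) by simp
  then show ?thesis using assms cyc_walk_in_set[OF assms(1)] by auto
qed

lemma cycle_walk_linked:
  assumes cyc: "is_cycle cs" "set cs \<subseteq> V" "cyc_edges cs \<subseteq> E" and x: "cyc_walk cs i = x"
    and "0 < s" "s \<le> t" "t < length cs" "\<And>k. s \<le> k \<Longrightarrow> k \<le> t \<Longrightarrow> cyc_walk cs (i + k) \<noteq> y"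
  shows "linked (cyc_walk cs (i + s)) (cyc_walk cs (i + t))"
proof -
  have "linked (cyc_walk cs (i + s)) (cyc_walk cs (i + (s + d)))" if "s + d \<le> t" for d
    using that
  proof (induction d)
    case (Suc d)
    let ?u = "cyc_walk cs (i + (s + d))" and ?w = "cyc_walk cs (i + (s + Suc d))"
    have "{?u, ?w} \<in> E" using cyc_walk_edge[OF cyc(1), of "i + (s + d)"] cyc(3) by auto
    moreover have "?w \<noteq> ?u" using cyc_walk_Suc_neq[OF cyc(1), of "i + (s + d)"] by simp
    moreover have "?u \<noteq> y" "?w \<noteq> y" by (rule assms(8); use Suc.prems in simp)+
    then have "?u \<in> V - {x, y}" "?w \<in> V - {x, y}"
      using cycle_inner_vertex[OF cyc(1,2) x, of "s + d"] cycle_inner_vertex[OF cyc(1,2) x, of "s + Suc d"]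
        assms(5,7) Suc.prems by simp_all
    ultimately have "inner_edge ?u ?w" by (auto simp: inner_edge_def)
    then show ?case using Suc by (auto intro: rtranclp.rtrancl_into_rtrancl)
  qed simp
  from this[of "t - s"] show ?thesis using assms(6) by simp
qed

lemma cycle_without_y:
  assumes cyc: "is_cycle cs" "set cs \<subseteq> V" "cyc_edges cs \<subseteq> E" and "x \<in> set cs" "y \<notin> set cs"
  shows "stretch x = 0"
proof -
  let ?n = "length cs" and ?w = "cyc_walk cs"
  obtain i where "i < ?n" and x: "?w i = x" by (rule cyc_walk_surj[OF cyc(1) \<open>x \<in> set cs\<close>])
  have n3: "3 \<le> ?n" using cyc(1) by (simp add: is_cycle_def)
  have "linked (?w (i + 1)) (?w (i + (?n - 1)))"
    using n3 \<open>y \<notin> set cs\<close> cyc_walk_in_set[OF cyc(1)] by (intro cycle_walk_linked[OF cyc x]) auto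
  moreover have "?w (i + 1) \<noteq> ?w (i + (?n - 1))"
    using cyc_walk_shift_inj[OF cyc(1), of 1 "?n - 1" i] n3 by simp
  moreover have "{x, ?w (i + 1)} \<in> E" "{x, ?w (i + (?n - 1))} \<in> E"
    using cyc_walk_edge[OF cyc(1), of i] cyc_walk_pred_edge[OF cyc(1), of i] cyc(3) x by auto
  ultimately show ?thesis using stretch_x_zero_if_linked by blast
qed

lemma cycle_y_position:
  assumes cyc: "is_cycle cs" and x: "cyc_walk cs i = x" and "y \<in> set cs"
  obtains j where "0 < j" "j < length cs" "cyc_walk cs (i + j) = y"
    "\<forall>k<length cs. k \<noteq> j \<longrightarrow> cyc_walk cs (i + k) \<noteq> y"
proof -
  obtain j where j: "j < length cs" "cyc_walk cs (i + j) = y"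
    using cyc_walk_surj_from[OF cyc \<open>y \<in> set cs\<close>] .
  have "j \<noteq> 0"
  proof
    assume "j = 0"
    then show False using j(2) x x_neq_y by simp
  qed
  moreover have "\<forall>k<length cs. k \<noteq> j \<longrightarrow> cyc_walk cs (i + k) \<noteq> y"
    using cyc_walk_shift_inj[OF cyc _ j(1), of _ i] j(2) by auto
  ultimately show ?thesis using that j by blast
qed

lemma cycle_route_succ:
  assumes cyc: "is_cycle cs" "set cs \<subseteq> V" "cyc_edges cs \<subseteq> E" and x: "cyc_walk cs i = x"
    and "y \<in> set cs"
  shows "\<exists>b. route (cyc_walk cs (i + 1)) b"
proof -
  let ?w = "cyc_walk cs"
  obtain j where j: "0 < j" "j < length cs" "?w (i + j) = y" and only_j: "\<forall>k<length cs. k \<noteq> j \<longrightarrow> ?w (i + k) \<noteq> y"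
    by (rule cycle_y_position[OF cyc(1) x \<open>y \<in> set cs\<close>])
  have inner: "?w (i + k) \<in> V - {x, y}" if "0 < k" "k < length cs" "k \<noteq> j" for k
    using cycle_inner_vertex[OF cyc(1,2) x that(1,2)] only_j that(2,3) by blast
  have edge: "{?w (i + k), ?w (i + Suc k)} \<in> E" for k
    using cyc_walk_edge[OF cyc(1), of "i + k"] cyc(3) by auto
  have "{x, ?w (i + 1)} \<in> E" using edge[of 0] x by simp
  show ?thesis
  proof (cases "j = 1")
    case True
    then show ?thesis using \<open>{x, ?w (i + 1)} \<in> E\<close> j(3) by (auto simp: route_def)
  next
    case False
    then have "linked (?w (i + 1)) (?w (i + (j - 1)))"
      using j only_j by (intro cycle_walk_linked[OF cyc x]) auto
    moreover have "?w (i + 1) \<in> V - {x, y}" "?w (i + (j - 1)) \<in> V - {x, y}"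
      using inner[of 1] inner[of "j - 1"] j False by auto
    moreover have "{?w (i + (j - 1)), y} \<in> E"
      using edge[of "j - 1"] j False by (simp add: Suc_diff_1)
    ultimately have "route (?w (i + 1)) (?w (i + (j - 1)))"
      using \<open>{x, ?w (i + 1)} \<in> E\<close> by (simp add: route_def)
    then show ?thesis by blast
  qed
qed

lemma cycle_route_pred:
  assumes cyc: "is_cycle cs" "set cs \<subseteq> V" "cyc_edges cs \<subseteq> E" and x: "cyc_walk cs i = x"
    and "y \<in> set cs"
  shows "\<exists>b. route (cyc_walk cs (i + (length cs - 1))) b"
proof -
  let ?n = "length cs" and ?w = "cyc_walk cs"
  obtain j where j: "0 < j" "j < ?n" "?w (i + j) = y" and only_j: "\<forall>k<?n. k \<noteq> j \<longrightarrow> ?w (i + k) \<noteq> y"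
    by (rule cycle_y_position[OF cyc(1) x \<open>y \<in> set cs\<close>])
  have inner: "?w (i + k) \<in> V - {x, y}" if "0 < k" "k < ?n" "k \<noteq> j" for k
    using cycle_inner_vertex[OF cyc(1,2) x that(1,2)] only_j that(2,3) by blast
  define a where "a = ?w (i + (?n - 1))"
  have "{x, a} \<in> E" using cyc_walk_pred_edge[OF cyc(1), of i] cyc(3) x by (auto simp: a_def)
  show ?thesis
  proof (cases "j = ?n - 1")
    case True
    then show ?thesis using \<open>{x, a} \<in> E\<close> j(3) by (auto simp: route_def a_def)
  next
    case False
    then have "linked (?w (i + (j + 1))) a"
      unfolding a_def using j only_j by (intro cycle_walk_linked[OF cyc x]) auto
    moreover have "a \<in> V - {x, y}" "?w (i + (j + 1)) \<in> V - {x, y}"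
      using inner[of "?n - 1"] inner[of "j + 1"] j False by (auto simp: a_def)
    moreover have "{?w (i + (j + 1)), y} \<in> E"
      using cyc_walk_edge[OF cyc(1), of "i + j"] cyc(3) j(3) by (auto simp: insert_commute)
    ultimately have "route a (?w (i + (j + 1)))"
      using \<open>{x, a} \<in> E\<close> linked_sym by (simp add: route_def)
    then show ?thesis by (auto simp: a_def)
  qed
qed

lemma stretch_x_zero:
  assumes "cycle_pair_at E V x"
  shows "stretch x = 0"
proof -
  obtain cs1 cs2 b where cyc1: "is_cycle cs1" "set cs1 \<subseteq> V" "cyc_edges cs1 \<subseteq> E" and "x \<in> set cs1"
    and cyc2: "is_cycle cs2" "set cs2 \<subseteq> V" "cyc_edges cs2 \<subseteq> E"
    and b: "{x, b} \<in> cyc_edges cs2" "{x, b} \<notin> cyc_edges cs1"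
    using assms unfolding cycle_pair_at_def by blast
  have "x \<in> set cs2" using cyc_edges_vertex[OF cyc2(1) b(1)] by simp
  show ?thesis
  proof (cases "y \<in> set cs1 \<and> y \<in> set cs2")
    case False
    then show ?thesis
      using cycle_without_y[OF cyc1 \<open>x \<in> set cs1\<close>] cycle_without_y[OF cyc2 \<open>x \<in> set cs2\<close>] by blast
  next
    case True
    let ?n1 = "length cs1" and ?w1 = "cyc_walk cs1" and ?w2 = "cyc_walk cs2"
    obtain i1 where "i1 < ?n1" and x1: "?w1 i1 = x" by (rule cyc_walk_surj[OF cyc1(1) \<open>x \<in> set cs1\<close>])
    obtain i2 where "i2 < length cs2" and x2: "?w2 i2 = x" by (rule cyc_walk_surj[OF cyc2(1) \<open>x \<in> set cs2\<close>])
    obtain b1 b2 where r1: "route (?w1 (i1 + 1)) b1" and r2: "route (?w1 (i1 + (?n1 - 1))) b2"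
      using cycle_route_succ[OF cyc1 x1] cycle_route_pred[OF cyc1 x1] True by blast
    have "b = ?w2 (i2 + 1) \<or> b = ?w2 (i2 + (length cs2 - 1))"
      using cyc_edges_neighbour[OF cyc2(1), of i2 b] b(1) x2 by simp
    then obtain b3 where r3: "route b b3"
      using cycle_route_succ[OF cyc2 x2] cycle_route_pred[OF cyc2 x2] True by blast
    have n3: "3 \<le> ?n1" using cyc1(1) by (simp add: is_cycle_def)
    have "?w1 (i1 + 1) \<noteq> ?w1 (i1 + (?n1 - 1))"
      using cyc_walk_shift_inj[OF cyc1(1), of 1 "?n1 - 1" i1] n3 by simp
    moreover have "{x, ?w1 (i1 + 1)} \<in> cyc_edges cs1" "{x, ?w1 (i1 + (?n1 - 1))} \<in> cyc_edges cs1"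
      using cyc_walk_edge[OF cyc1(1), of i1] cyc_walk_pred_edge[OF cyc1(1), of i1] x1 by auto
    ultimately show ?thesis using three_routes[OF r1 r2 r3] b(2) by auto
  qed
qed

end

section \<open>Generic placements in the plane\<close>

definition rel_x :: "('a \<Rightarrow> nat \<Rightarrow> real) \<Rightarrow> 'a \<Rightarrow> 'a \<Rightarrow> real" where
  "rel_x p v u = p u 0 - p v 0"

definition rel_y :: "('a \<Rightarrow> nat \<Rightarrow> real) \<Rightarrow> 'a \<Rightarrow> 'a \<Rightarrow> real" where
  "rel_y p v u = p u 1 - p v 1"

definition spoke_cross :: "('a \<Rightarrow> nat \<Rightarrow> real) \<Rightarrow> 'a \<Rightarrow> 'a \<Rightarrow> 'a \<Rightarrow> real" where
  "spoke_cross p v u w = rel_x p v u * rel_y p v w - rel_x p v w * rel_y p v u"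

definition spoke_dot :: "('a \<Rightarrow> nat \<Rightarrow> real) \<Rightarrow> 'a \<Rightarrow> 'a \<Rightarrow> 'a \<Rightarrow> real" where
  "spoke_dot p v u w = rel_x p v u * (rel_x p v u - rel_x p v w) + rel_y p v u * (rel_y p v u - rel_y p v w)"

definition spoke_tau :: "('a \<Rightarrow> nat \<Rightarrow> real) \<Rightarrow> 'a \<Rightarrow> 'a \<Rightarrow> 'a \<Rightarrow> real" where
  "spoke_tau p v u w = spoke_dot p v u w / spoke_cross p v u w"

definition plane_place :: "('a \<Rightarrow> real \<times> real) \<Rightarrow> 'a \<Rightarrow> nat \<Rightarrow> real" where
  "plane_place pt u i = (if i = 0 then fst (pt u) else snd (pt u))"

lemma plane_place_simps [simp]:
  "plane_place pt u 0 = fst (pt u)" "plane_place pt u (Suc i) = snd (pt u)"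
  by (simp_all add: plane_place_def)

lemma rat_polyfun_rel:
  assumes "finite V" "u \<in> V" "v \<in> V"
  shows "rat_polyfun (V \<times> {..<2}) (\<lambda>z. rel_x (curry z) v u)"
    "rat_polyfun (V \<times> {..<2}) (\<lambda>z. rel_y (curry z) v u)"
  unfolding rel_x_def rel_y_def using assms by (intro rat_polyfun_diff rat_polyfun_coord; simp)+

lemma rat_polyfun_spoke:
  assumes "finite V" "u \<in> V" "w \<in> V" "v \<in> V"
  shows "rat_polyfun (V \<times> {..<2}) (\<lambda>z. spoke_cross (curry z) v u w)"
    "rat_polyfun (V \<times> {..<2}) (\<lambda>z. spoke_dot (curry z) v u w)"
  unfolding spoke_cross_def spoke_dot_def
  using assms by (intro rat_polyfun_intros rat_polyfun_rel; simp)+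

lemma gen_rel_x_nonzero:
  assumes "finite V" "u \<in> V" "v \<in> V" "u \<noteq> v"
  shows "rel_x (gen_p 2 V) v u \<noteq> 0"
proof (rule gen_p_nonzero[OF assms(1) rat_polyfun_rel(1)[OF assms(1-3)]])
  show "rel_x (plane_place (\<lambda>a. if a = u then (1, 0) else (0, 0))) v u \<noteq> 0"
    using assms(4) by (auto simp: rel_x_def)
qed

lemma gen_spoke_cross_nonzero:
  assumes "finite V" "u \<in> V" "w \<in> V" "v \<in> V" "u \<noteq> v" "w \<noteq> v" "u \<noteq> w"
  shows "spoke_cross (gen_p 2 V) v u w \<noteq> 0"
proof (rule gen_p_nonzero[OF assms(1) rat_polyfun_spoke(1)[OF assms(1-4)]])
  show "spoke_cross (plane_place (\<lambda>a. if a = u then (1, 0) else if a = w then (0, 1) else (0, 0))) v u w \<noteq> 0"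
    using assms(5-7) by (auto simp: spoke_cross_def rel_x_def rel_y_def)
qed

lemma gen_spoke_tau_inj:
  assumes "finite V" "x \<in> V" "a \<in> V" "b \<in> V" "v \<in> V"
    "x \<noteq> v" "a \<noteq> v" "b \<noteq> v" "x \<noteq> a" "x \<noteq> b" "a \<noteq> b"
  shows "spoke_tau (gen_p 2 V) v x a \<noteq> spoke_tau (gen_p 2 V) v x b"
proof -
  let ?p = "gen_p 2 V"
  define f where "f p = spoke_dot p v x a * spoke_cross p v x b - spoke_dot p v x b * spoke_cross p v x a" for p
  have "rat_polyfun (V \<times> {..<2}) (\<lambda>z. f (curry z))"
    unfolding f_def using assms by (intro rat_polyfun_intros rat_polyfun_spoke) auto
  moreover have "f (plane_place (\<lambda>u. if u = x then (1, 0) else if u = a then (0, 1)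
      else if u = b then (2, 1) else (0, 0))) \<noteq> 0"
    using assms(6-11) by (auto simp: f_def spoke_dot_def spoke_cross_def rel_x_def rel_y_def)
  ultimately have "f ?p \<noteq> 0" by (rule gen_p_nonzero[OF assms(1)])
  moreover have "spoke_cross ?p v x a \<noteq> 0" "spoke_cross ?p v x b \<noteq> 0"
    using gen_spoke_cross_nonzero[OF assms(1,2,3,5,6,7,9)] gen_spoke_cross_nonzero[OF assms(1,2,4,5,6,8,10)] .
  ultimately show ?thesis by (auto simp: spoke_tau_def f_def field_simps)
qed

lemma route_det_cleared:
  fixes n1 n2 n3 c1 c2 c3 m1 m2 m3 d1 d2 d3 :: real
  assumes "c1 \<noteq> 0" "c2 \<noteq> 0" "c3 \<noteq> 0" "d1 \<noteq> 0" "d2 \<noteq> 0" "d3 \<noteq> 0"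
  shows "((n1/c1 - n2/c2) * (m1/d1 - m3/d3) - (n1/c1 - n3/c3) * (m1/d1 - m2/d2)) * (c1*c2*c3*d1*d2*d3)
     = (n1*c2 - n2*c1) * c3 * (m1*d3 - m3*d1) * d2 - (n1*c3 - n3*c1) * c2 * (m1*d2 - m2*d1) * d3"
  using assms by (simp add: field_simps)

definition route_det_numer ::
    "('a \<Rightarrow> nat \<Rightarrow> real) \<Rightarrow> 'a \<Rightarrow> 'a \<Rightarrow> 'a \<Rightarrow> 'a \<Rightarrow> 'a \<Rightarrow> 'a \<Rightarrow> 'a \<Rightarrow> 'a \<Rightarrow> 'a \<Rightarrow> real" where
  "route_det_numer p v x y a1 b1 a2 b2 a3 b3 =
    (spoke_dot p v x a1 * spoke_cross p v x a2 - spoke_dot p v x a2 * spoke_cross p v x a1) * spoke_cross p v x a3 *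
    (spoke_dot p v y b1 * spoke_cross p v y b3 - spoke_dot p v y b3 * spoke_cross p v y b1) * spoke_cross p v y b2
  - (spoke_dot p v x a1 * spoke_cross p v x a3 - spoke_dot p v x a3 * spoke_cross p v x a1) * spoke_cross p v x a2 *
    (spoke_dot p v y b1 * spoke_cross p v y b2 - spoke_dot p v y b2 * spoke_cross p v y b1) * spoke_cross p v y b3"

text \<open>The witness puts \<open>x\<close>, \<open>y\<close> and the apex at fixed points and both ends of the \<open>i\<close>-th
  route at a common point \<open>c\<^sub>i\<close>; disjointness keeps these assignments consistent.\<close>

lemma route_det_numer_witness:
  assumes "v \<notin> W" "x \<in> W" "y \<in> W" "x \<noteq> y"
    and ends: "route_ends x y W a1 b1" "route_ends x y W a2 b2" "route_ends x y W a3 b3"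
    and disj: "disjoint_routes y a1 b1 a2 b2" "disjoint_routes y a1 b1 a3 b3" "disjoint_routes y a2 b2 a3 b3"
  shows "\<exists>q. route_det_numer q v x y a1 b1 a2 b2 a3 b3 \<noteq> 0"
proof
  define pt :: "_ \<Rightarrow> real \<times> real" where "pt u = (if u = v then (0, 0) else if u = x then (1, 0)
    else if u = y then (0, 1) else if u \<in> {a1, b1} then (1, 2) else if u \<in> {a2, b2} then (2, 3) else (3, -1))" for u
  have not_v: "a1 \<noteq> v" "b1 \<noteq> v" "a2 \<noteq> v" "b2 \<noteq> v" "a3 \<noteq> v" "b3 \<noteq> v" "x \<noteq> v" "y \<noteq> v"
    using ends assms(1-3) by (auto simp: route_ends_def)
  have pt_apex: "pt v = (0, 0)" "pt x = (1, 0)" "pt y = (0, 1)"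
    using not_v assms(4) by (auto simp: pt_def)
  have pt1: "pt a1 = (if a1 = y then (0, 1) else (1, 2))" "pt b1 = (if a1 = y then (1, 0) else (1, 2))"
    using ends(1) not_v assms(4) by (auto simp: pt_def route_ends_def)
  have pt2: "pt a2 = (if a2 = y then (0, 1) else (2, 3))" "pt b2 = (if a2 = y then (1, 0) else (2, 3))"
    using ends(1,2) disj(1) not_v assms(4) by (auto simp: pt_def route_ends_def disjoint_routes_def)
  have pt3: "pt a3 = (if a3 = y then (0, 1) else (3, -1))" "pt b3 = (if a3 = y then (1, 0) else (3, -1))"
    using ends disj(2,3) not_v assms(4) by (auto simp: pt_def route_ends_def disjoint_routes_def)
  have "a1 \<noteq> a2" "a1 \<noteq> a3" "a2 \<noteq> a3" using disj by (auto simp: disjoint_routes_def)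
  then show "route_det_numer (plane_place pt) v x y a1 b1 a2 b2 a3 b3 \<noteq> 0"
    unfolding route_det_numer_def spoke_dot_def spoke_cross_def rel_x_def rel_y_def
    by (cases "a1 = y"; cases "a2 = y"; cases "a3 = y") (simp_all add: pt_apex pt1 pt2 pt3)
qed

lemma gen_route_det_nonzero:
  assumes fin: "finite V'" and "v \<in> V'" "W \<subseteq> V'" "v \<notin> W" "x \<in> W" "y \<in> W" "x \<noteq> y"
    and ends: "route_ends x y W a1 b1" "route_ends x y W a2 b2" "route_ends x y W a3 b3"
    and disj: "disjoint_routes y a1 b1 a2 b2" "disjoint_routes y a1 b1 a3 b3" "disjoint_routes y a2 b2 a3 b3"
  shows "route_det (spoke_tau (gen_p 2 V') v) x y a1 b1 a2 b2 a3 b3 \<noteq> 0"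
proof -
  let ?p = "gen_p 2 V'"
  have mem: "a1 \<in> V'" "b1 \<in> V'" "a2 \<in> V'" "b2 \<in> V'" "a3 \<in> V'" "b3 \<in> V'" "x \<in> V'" "y \<in> V'"
    using ends assms(3,5,6) by (auto simp: route_ends_def)
  have "a1 \<noteq> v" "b1 \<noteq> v" "a2 \<noteq> v" "b2 \<noteq> v" "a3 \<noteq> v" "b3 \<noteq> v" "x \<noteq> v" "y \<noteq> v"
    "a1 \<noteq> x" "a2 \<noteq> x" "a3 \<noteq> x" "b1 \<noteq> y" "b2 \<noteq> y" "b3 \<noteq> y"
    using ends assms(4-7) by (auto simp: route_ends_def)
  then have crosses: "spoke_cross ?p v x a1 \<noteq> 0" "spoke_cross ?p v x a2 \<noteq> 0" "spoke_cross ?p v x a3 \<noteq> 0"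
    "spoke_cross ?p v y b1 \<noteq> 0" "spoke_cross ?p v y b2 \<noteq> 0" "spoke_cross ?p v y b3 \<noteq> 0"
    using gen_spoke_cross_nonzero[OF fin _ _ \<open>v \<in> V'\<close>] mem by auto
  have "route_det (spoke_tau ?p v) x y a1 b1 a2 b2 a3 b3 *
      (spoke_cross ?p v x a1 * spoke_cross ?p v x a2 * spoke_cross ?p v x a3 *
       spoke_cross ?p v y b1 * spoke_cross ?p v y b2 * spoke_cross ?p v y b3)
    = route_det_numer ?p v x y a1 b1 a2 b2 a3 b3"
    unfolding route_det_def spoke_tau_def route_det_numer_def by (rule route_det_cleared[OF crosses])
  moreover obtain q where "route_det_numer q v x y a1 b1 a2 b2 a3 b3 \<noteq> 0"
    using route_det_numer_witness[OF assms(4-7) ends disj] by blast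
  then have "route_det_numer ?p v x y a1 b1 a2 b2 a3 b3 \<noteq> 0"
    unfolding route_det_numer_def using fin mem \<open>v \<in> V'\<close>
    by (intro gen_p_nonzero[OF fin]) (intro rat_polyfun_intros rat_polyfun_spoke; simp)+
  ultimately show ?thesis by auto
qed

section \<open>Motions of the cone\<close>

lemma inner_on_rig_vec:
  assumes "finite W" "a \<in> W" "b \<in> W" "a \<noteq> b"
  shows "inner_on (W \<times> {..<2}) q (rig_vec 2 W p {a, b})
     = (q (a, 0) - q (b, 0)) * (p a 0 - p b 0) + (q (a, 1) - q (b, 1)) * (p a 1 - p b 1)"
proof -
  let ?f = "\<lambda>u i. q (u, i) * rig_row p {a, b} u i"
  have "inner_on (W \<times> {..<2}) q (rig_vec 2 W p {a, b}) = (\<Sum>k\<in>W \<times> {..<2}. ?f (fst k) (snd k))"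
    unfolding inner_on_def rig_vec_def by (intro sum.cong refl) auto
  also have "\<dots> = (\<Sum>u\<in>W. \<Sum>i<2. ?f u i)"
    by (simp add: sum.cartesian_product case_prod_beta)
  also have "\<dots> = (\<Sum>u\<in>{a, b}. \<Sum>i<2. ?f u i)"
    using assms(1-3) by (intro sum.mono_neutral_right) (auto simp: rig_row_notin)
  also have "\<dots> = (q (a, 0) - q (b, 0)) * (p a 0 - p b 0) + (q (a, 1) - q (b, 1)) * (p a 1 - p b 1)"
  proof -
    have ra: "rig_row p {a, b} a i = p a i - p b i" for i
      using rig_row_doubleton[OF assms(4)] .
    have rb: "rig_row p {a, b} b i = p b i - p a i" for i
      using rig_row_doubleton[of b a p i] assms(4) by (simp add: insert_commute)
    show ?thesis using assms(4) by (simp add: numeral_2_eq_2 ra rb) (simp add: algebra_simps)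
  qed
  finally show ?thesis .
qed

lemma spoke_decomposition:
  fixes X Y A B :: real
  assumes N: "X\<^sup>2 + Y\<^sup>2 \<noteq> 0"
  shows "A = (X * A + Y * B) / (X\<^sup>2 + Y\<^sup>2) * X - (X * B - Y * A) / (X\<^sup>2 + Y\<^sup>2) * Y"
    and "B = (X * A + Y * B) / (X\<^sup>2 + Y\<^sup>2) * Y + (X * B - Y * A) / (X\<^sup>2 + Y\<^sup>2) * X"
proof -
  have "(X * A + Y * B) / (X\<^sup>2 + Y\<^sup>2) * X - (X * B - Y * A) / (X\<^sup>2 + Y\<^sup>2) * Y
      = ((X * A + Y * B) * X - (X * B - Y * A) * Y) / (X\<^sup>2 + Y\<^sup>2)"
    by (simp only: times_divide_eq_left diff_divide_distrib[symmetric])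
  also have "(X * A + Y * B) * X - (X * B - Y * A) * Y = A * (X\<^sup>2 + Y\<^sup>2)"
    by (simp add: algebra_simps power2_eq_square)
  finally show "A = (X * A + Y * B) / (X\<^sup>2 + Y\<^sup>2) * X - (X * B - Y * A) / (X\<^sup>2 + Y\<^sup>2) * Y"
    using nonzero_mult_div_cancel_right[OF N, of A] by linarith
  have "(X * A + Y * B) / (X\<^sup>2 + Y\<^sup>2) * Y + (X * B - Y * A) / (X\<^sup>2 + Y\<^sup>2) * X
      = ((X * A + Y * B) * Y + (X * B - Y * A) * X) / (X\<^sup>2 + Y\<^sup>2)"
    by (simp only: times_divide_eq_left add_divide_distrib[symmetric])
  also have "(X * A + Y * B) * Y + (X * B - Y * A) * X = B * (X\<^sup>2 + Y\<^sup>2)"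
    by (simp add: algebra_simps power2_eq_square)
  finally show "B = (X * A + Y * B) / (X\<^sup>2 + Y\<^sup>2) * Y + (X * B - Y * A) / (X\<^sup>2 + Y\<^sup>2) * X"
    using nonzero_mult_div_cancel_right[OF N, of B] by linarith
qed

lemma spoke_edge_identity:
  fixes Xu Yu Xw Yw su tu sw tw :: real
  assumes D: "Xu * Yw - Xw * Yu \<noteq> 0"
    and "(Xu - Xw) * ((su * Xu - tu * Yu) - (sw * Xw - tw * Yw))
      + (Yu - Yw) * ((su * Yu + tu * Xu) - (sw * Yw + tw * Xw)) = 0"
  shows "tu - tw = su * ((Xu * (Xu - Xw) + Yu * (Yu - Yw)) / (Xu * Yw - Xw * Yu))
    - sw * ((Xw * (Xw - Xu) + Yw * (Yw - Yu)) / (Xw * Yu - Xu * Yw))"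
proof -
  let ?D = "Xu * Yw - Xw * Yu" and ?P = "Xu * (Xu - Xw) + Yu * (Yu - Yw)" and ?Q = "Xw * (Xw - Xu) + Yw * (Yw - Yu)"
  have key: "?D * (tu - tw) = su * ?P + sw * ?Q"
    using assms(2) by (simp add: algebra_simps)
  have "Xw * Yu - Xu * Yw = - ?D" by simp
  then have "su * (?P / ?D) - sw * (?Q / (Xw * Yu - Xu * Yw)) = su * (?P / ?D) + sw * (?Q / ?D)"
    by (simp only: divide_minus_right)
  also have "\<dots> = (su * ?P + sw * ?Q) / ?D"
    by (simp only: times_divide_eq_right add_divide_distrib[symmetric])
  also have "\<dots> = tu - tw" using D by (simp add: key[symmetric])
  finally show ?thesis by simp
qed

definition spoke_stretch :: "('a \<Rightarrow> nat \<Rightarrow> real) \<Rightarrow> 'a \<Rightarrow> ('a \<times> nat \<Rightarrow> real) \<Rightarrow> 'a \<Rightarrow> real" where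
  "spoke_stretch p v q u = (rel_x p v u * rel_x (curry q) v u + rel_y p v u * rel_y (curry q) v u)
     / ((rel_x p v u)\<^sup>2 + (rel_y p v u)\<^sup>2)"

definition spoke_turn :: "('a \<Rightarrow> nat \<Rightarrow> real) \<Rightarrow> 'a \<Rightarrow> ('a \<times> nat \<Rightarrow> real) \<Rightarrow> 'a \<Rightarrow> real" where
  "spoke_turn p v q u = (rel_x p v u * rel_y (curry q) v u - rel_y p v u * rel_x (curry q) v u)
     / ((rel_x p v u)\<^sup>2 + (rel_y p v u)\<^sup>2)"

lemma inner_on_rig_vec_rel:
  assumes "finite W" "u \<in> W" "w \<in> W" "u \<noteq> w"
  shows "inner_on (W \<times> {..<2}) q (rig_vec 2 W p {u, w})
    = (rel_x (curry q) v u - rel_x (curry q) v w) * (rel_x p v u - rel_x p v w)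
      + (rel_y (curry q) v u - rel_y (curry q) v w) * (rel_y p v u - rel_y p v w)"
  using inner_on_rig_vec[OF assms] by (simp add: rel_x_def rel_y_def)

lemma rel_self [simp]: "rel_x p v v = 0" "rel_y p v v = 0"
  by (simp_all add: rel_x_def rel_y_def)

lemma inner_on_spoke:
  assumes "finite W" "u \<in> W" "v \<in> W" "u \<noteq> v" "(rel_x p v u)\<^sup>2 + (rel_y p v u)\<^sup>2 \<noteq> 0"
  shows "inner_on (W \<times> {..<2}) q (rig_vec 2 W p {v, u}) = spoke_stretch p v q u * ((rel_x p v u)\<^sup>2 + (rel_y p v u)\<^sup>2)"
proof -
  have "inner_on (W \<times> {..<2}) q (rig_vec 2 W p {v, u})
      = rel_x p v u * rel_x (curry q) v u + rel_y p v u * rel_y (curry q) v u"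
    using inner_on_rig_vec_rel[OF assms(1,3,2) assms(4)[symmetric], of q p v] by (simp add: mult.commute)
  then show ?thesis using assms(5) by (simp add: spoke_stretch_def)
qed

lemma spoke_edge_eq:
  fixes p :: "'a \<Rightarrow> nat \<Rightarrow> real"
  assumes "finite W" "u \<in> W" "w \<in> W" "u \<noteq> w"
    and N: "(rel_x p v u)\<^sup>2 + (rel_y p v u)\<^sup>2 \<noteq> 0" "(rel_x p v w)\<^sup>2 + (rel_y p v w)\<^sup>2 \<noteq> 0"
    and "spoke_cross p v u w \<noteq> 0" and "inner_on (W \<times> {..<2}) q (rig_vec 2 W p {u, w}) = 0"
  shows "spoke_turn p v q u - spoke_turn p v q w
    = spoke_stretch p v q u * spoke_tau p v u w - spoke_stretch p v q w * spoke_tau p v w u"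
proof -
  let ?X = "rel_x p v" and ?Y = "rel_y p v" and ?s = "spoke_stretch p v q" and ?t = "spoke_turn p v q"
  have dec: "rel_x (curry q) v a = ?s a * ?X a - ?t a * ?Y a" "rel_y (curry q) v a = ?s a * ?Y a + ?t a * ?X a"
    if "(?X a)\<^sup>2 + (?Y a)\<^sup>2 \<noteq> 0" for a
    unfolding spoke_stretch_def spoke_turn_def using spoke_decomposition[OF that] by blast+
  have "(?X u - ?X w) * ((?s u * ?X u - ?t u * ?Y u) - (?s w * ?X w - ?t w * ?Y w))
      + (?Y u - ?Y w) * ((?s u * ?Y u + ?t u * ?X u) - (?s w * ?Y w + ?t w * ?X w)) = 0"
    using assms(8) unfolding inner_on_rig_vec_rel[OF assms(1-4), of q p v] dec[OF N(1)] dec[OF N(2)]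
    by (simp only: mult.commute)
  moreover have "?X u * ?Y w - ?X w * ?Y u \<noteq> 0" using assms(7) by (simp add: spoke_cross_def)
  ultimately show ?thesis
    unfolding spoke_tau_def spoke_dot_def spoke_cross_def by (intro spoke_edge_identity)
qed

lemma spoke_coords_of_motion:
  fixes q :: "'a \<times> nat \<Rightarrow> real"
  assumes finV: "finite V" and vV: "v \<notin> V"
    and edges: "\<forall>e\<in>E. \<exists>a b. a \<in> V \<and> b \<in> V \<and> a \<noteq> b \<and> e = {a, b}" and xy: "x \<in> V" "y \<in> V" "x \<noteq> y"
    and qE: "\<And>e. e \<in> E \<Longrightarrow> inner_on (insert v V \<times> {..<2}) q (rig_vec 2 (insert v V) (gen_p 2 (insert v V)) e) = 0"
    and qv: "\<And>u. u \<in> V \<Longrightarrow> u \<noteq> x \<Longrightarrow> u \<noteq> y \<Longrightarrow> inner_on (insert v V \<times> {..<2}) q (rig_vec 2 (insert v V) (gen_p 2 (insert v V)) {v, u}) = 0"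
  shows "spoke_coords E V x y (spoke_turn (gen_p 2 (insert v V)) v q) (spoke_stretch (gen_p 2 (insert v V)) v q)
    (spoke_tau (gen_p 2 (insert v V)) v)"
proof -
  let ?W = "insert v V"
  let ?p = "gen_p 2 ?W"
  have fin: "finite ?W" "v \<in> ?W" "V \<subseteq> ?W" using finV by auto
  have N: "(rel_x ?p v u)\<^sup>2 + (rel_y ?p v u)\<^sup>2 \<noteq> 0" if "u \<in> V" for u
    using gen_rel_x_nonzero[OF fin(1), of u v] fin that vV by auto
  show ?thesis
  proof
    fix u w assume uw: "{u, w} \<in> E" "u \<noteq> w"
    then have "u \<in> V" "w \<in> V" using edges by (auto simp: doubleton_eq_iff)
    moreover have "spoke_cross ?p v u w \<noteq> 0"
      by (rule gen_spoke_cross_nonzero[OF fin(1) _ _ fin(2)]) (use \<open>u \<in> V\<close> \<open>w \<in> V\<close> fin vV uw(2) in auto)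
    ultimately show "spoke_turn ?p v q u - spoke_turn ?p v q w
        = spoke_stretch ?p v q u * spoke_tau ?p v u w - spoke_stretch ?p v q w * spoke_tau ?p v w u"
      using fin(3) by (intro spoke_edge_eq[OF fin(1) _ _ uw(2) N N _ qE[OF uw(1)]]) auto
  next
    fix u assume "u \<in> V" "u \<noteq> x" "u \<noteq> y"
    moreover have "u \<noteq> v" using \<open>u \<in> V\<close> vV by blast
    ultimately have "spoke_stretch ?p v q u * ((rel_x ?p v u)\<^sup>2 + (rel_y ?p v u)\<^sup>2) = 0"
      using qv inner_on_spoke[OF fin(1) _ fin(2) _ N, of u q] fin(3) by auto
    then show "spoke_stretch ?p v q u = 0" using N[OF \<open>u \<in> V\<close>] by auto
  next
    fix a b assume "a \<in> V" "b \<in> V" "a \<noteq> x" "b \<noteq> x" "a \<noteq> b"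
    then show "spoke_tau ?p v x a \<noteq> spoke_tau ?p v x b"
      by (intro gen_spoke_tau_inj[OF fin(1)]) (use fin xy vV in auto)
  next
    fix a1 b1 a2 b2 a3 b3
    assume "route_ends x y V a1 b1" "route_ends x y V a2 b2" "route_ends x y V a3 b3"
      "disjoint_routes y a1 b1 a2 b2" "disjoint_routes y a1 b1 a3 b3" "disjoint_routes y a2 b2 a3 b3"
    then show "route_det (spoke_tau ?p v) x y a1 b1 a2 b2 a3 b3 \<noteq> 0"
      by (intro gen_route_det_nonzero[OF fin(1,2,3) vV xy]) auto
  qed (use xy in auto)
qed

lemma cone_motion_spoke:
  fixes q :: "'a \<times> nat \<Rightarrow> real"
  assumes finV: "finite V" and vV: "v \<notin> V"
    and edges: "\<forall>e\<in>E. \<exists>a b. a \<in> V \<and> b \<in> V \<and> a \<noteq> b \<and> e = {a, b}"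
    and xy: "x \<in> V" "y \<in> V" "x \<noteq> y" and pair: "cycle_pair_at E V x"
    and qE: "\<And>e. e \<in> E \<Longrightarrow> inner_on (insert v V \<times> {..<2}) q (rig_vec 2 (insert v V) (gen_p 2 (insert v V)) e) = 0"
    and qv: "\<And>u. u \<in> V \<Longrightarrow> u \<noteq> x \<Longrightarrow> u \<noteq> y \<Longrightarrow> inner_on (insert v V \<times> {..<2}) q (rig_vec 2 (insert v V) (gen_p 2 (insert v V)) {v, u}) = 0"
  shows "inner_on (insert v V \<times> {..<2}) q (rig_vec 2 (insert v V) (gen_p 2 (insert v V)) {v, x}) = 0"
proof -
  let ?p = "gen_p 2 (insert v V)"
  interpret spoke_coords E V x y "spoke_turn ?p v q" "spoke_stretch ?p v q" "spoke_tau ?p v"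
    by (rule spoke_coords_of_motion[OF assms(1-6) qE qv])
  have "spoke_stretch ?p v q x = 0" by (rule stretch_x_zero[OF pair])
  moreover have "(rel_x ?p v x)\<^sup>2 + (rel_y ?p v x)\<^sup>2 \<noteq> 0"
    using gen_rel_x_nonzero[of "insert v V" x v] finV xy vV by auto
  ultimately show ?thesis using inner_on_spoke[of "insert v V" x v ?p q] finV xy vV by auto
qed

lemma supported_on_rig_vec: "supported_on (W \<times> {..<d}) (rig_vec d W p e)"
  by (simp add: supported_on_def rig_vec_def)

lemma edges_of_card_2:
  assumes "\<forall>e\<in>E. card e = 2"
  shows "\<forall>e\<in>E. \<exists>a b. a \<in> \<Union>E \<and> b \<in> \<Union>E \<and> a \<noteq> b \<and> e = {a, b}"
proof
  fix e assume "e \<in> E"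
  then obtain a b where "e = {a, b}" "a \<noteq> b" using assms by (auto simp: card_2_iff)
  then show "\<exists>a b. a \<in> \<Union>E \<and> b \<in> \<Union>E \<and> a \<noteq> b \<and> e = {a, b}" using \<open>e \<in> E\<close> by blast
qed

lemma finite_Union_of_card_2:
  assumes "finite E" "\<forall>e\<in>E. card e = 2"
  shows "finite (\<Union>E)"
proof (rule finite_Union[OF assms(1)])
  fix e assume "e \<in> E"
  then have "card e = 2" using assms(2) by blast
  then show "finite e" by (intro card_ge_0_finite) simp
qed

lemma finite_cone_edges: "finite E \<Longrightarrow> \<forall>e\<in>E. card e = 2 \<Longrightarrow> finite (cone_edges E v)"
proof -
  assume "finite E" "\<forall>e\<in>E. card e = 2"
  moreover have "{{v, u} | u. u \<in> \<Union>E} = (\<lambda>u. {v, u}) ` \<Union>E" by blast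
  ultimately show ?thesis using finite_Union_of_card_2[of E] by (simp add: cone_edges_def)
qed

lemma cycle_pair_at_mem: "cycle_pair_at E V x \<Longrightarrow> x \<in> V"
  by (auto simp: cycle_pair_at_def)

lemma cone_spoke_in_span:
  assumes finE: "finite E" and two: "\<forall>e\<in>E. card e = 2" and vE: "v \<notin> \<Union>E"
    and y: "y \<in> \<Union>E" "x \<noteq> y" and pair: "cycle_pair_at E (\<Union>E) x"
  shows "rig_vec 2 (insert v (\<Union>E)) (gen_p 2 (insert v (\<Union>E))) {v, x}
    \<in> fun_vec.span (rig_vec 2 (insert v (\<Union>E)) (gen_p 2 (insert v (\<Union>E))) ` (cone_edges E v - {{v, x}, {v, y}}))"
proof (rule in_span_if_orthogonal)
  let ?W = "insert v (\<Union>E)"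
  let ?r = "rig_vec 2 ?W (gen_p 2 ?W)" and ?C = "cone_edges E v - {{v, x}, {v, y}}"
  have finV: "finite (\<Union>E)" using finE two by (rule finite_Union_of_card_2)
  then show "finite (?W \<times> {..<2::nat})" by simp
  show "finite (?r ` ?C)" using finite_cone_edges[OF finE two] by simp
  show "supported_on (?W \<times> {..<2}) f" if "f \<in> ?r ` ?C" for f
    using that supported_on_rig_vec by blast
  show "supported_on (?W \<times> {..<2}) (?r {v, x})" by (rule supported_on_rig_vec)
  fix q assume q: "\<And>f. f \<in> ?r ` ?C \<Longrightarrow> inner_on (?W \<times> {..<2}) q f = 0"
  have E_in_C: "e \<in> ?C" if "e \<in> E" for e
    using that vE by (auto simp: cone_edges_def)
  have spokes_in_C: "{v, u} \<in> ?C" if "u \<in> \<Union>E" "u \<noteq> x" "u \<noteq> y" for u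
    using that by (auto simp: cone_edges_def doubleton_eq_iff)
  show "inner_on (?W \<times> {..<2}) q (?r {v, x}) = 0"
  proof (rule cone_motion_spoke[OF finV vE edges_of_card_2[OF two] cycle_pair_at_mem[OF pair] y pair])
    show "inner_on (?W \<times> {..<2}) q (?r e) = 0" if "e \<in> E" for e
      using q[OF imageI[OF E_in_C[OF that]]] .
    show "inner_on (?W \<times> {..<2}) q (?r {v, u}) = 0" if "u \<in> \<Union>E" "u \<noteq> x" "u \<noteq> y" for u
      using q[OF imageI[OF spokes_in_C[OF that]]] .
  qed
qed

lemma cone_Rrank_without_spokes:
  assumes finE: "finite E" and two: "\<forall>e\<in>E. card e = 2" and vE: "v \<notin> \<Union>E" and "x \<noteq> y"
    and pairs: "cycle_pair_at E (\<Union>E) x" "cycle_pair_at E (\<Union>E) y"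
  shows "Rrank 2 (insert v (\<Union>E)) (cone_edges E v)
    \<le> Rrank 2 (insert v (\<Union>E)) (cone_edges E v - {{v, x}, {v, y}})"
proof (rule Rrank_le_if_span)
  let ?W = "insert v (\<Union>E)"
  let ?r = "rig_vec 2 ?W (gen_p 2 ?W)" and ?C = "cone_edges E v - {{v, x}, {v, y}}"
  show "finite (cone_edges E v)" using finite_cone_edges[OF finE two] .
  show "?C \<subseteq> cone_edges E v" by blast
  fix e assume "e \<in> cone_edges E v"
  moreover have "?r {v, x} \<in> fun_vec.span (?r ` ?C)"
    using cone_spoke_in_span[OF finE two vE cycle_pair_at_mem[OF pairs(2)] \<open>x \<noteq> y\<close> pairs(1)] .
  moreover have "?r {v, y} \<in> fun_vec.span (?r ` ?C)"
    using cone_spoke_in_span[OF finE two vE cycle_pair_at_mem[OF pairs(1)] \<open>x \<noteq> y\<close>[symmetric] pairs(2)]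
    by (simp add: insert_commute)
  ultimately show "?r e \<in> fun_vec.span (?r ` ?C)"
    by (cases "e \<in> ?C") (auto intro: fun_vec.span_base)
qed

section \<open>The principal partition\<close>

lemma principal_partitionD:
  assumes "principal_partition d V D P"
  shows "\<Union>P = D" "\<And>A B. A \<in> P \<Longrightarrow> B \<in> P \<Longrightarrow> A \<noteq> B \<Longrightarrow> A \<inter> B = {}"
    "\<And>A. A \<in> P \<Longrightarrow> kfold_circuit d V (D - A) (card D - Rrank d V D - 1)"
proof -
  note pp = assms[unfolded principal_partition_def Let_def]
  show "\<Union>P = D" using pp by (rule conjunct1)
  have disj: "\<forall>A\<in>P. \<forall>B\<in>P. A \<noteq> B \<longrightarrow> A \<inter> B = {}"
    using pp[THEN conjunct2, THEN conjunct2] by (rule conjunct1)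
  then show "A \<inter> B = {}" if "A \<in> P" "B \<in> P" "A \<noteq> B" for A B using that by blast
  have eq: "{D - A | A. A \<in> P} = {D'. D' \<subseteq> D \<and> kfold_circuit d V D' (card D - Rrank d V D - 1)}"
    using pp[THEN conjunct2, THEN conjunct2] by (rule conjunct2)
  fix A assume "A \<in> P"
  then have "D - A \<in> {D - A | A. A \<in> P}" by blast
  then show "kfold_circuit d V (D - A) (card D - Rrank d V D - 1)" unfolding eq by simp
qed

lemma principal_partition_circuit_avoiding:
  assumes "principal_partition d V D P" "A \<in> P" "e \<in> D - A"
  shows "\<exists>Z. Rcircuit d V Z \<and> Z \<subseteq> D - A \<and> e \<in> Z"
proof -
  have "Rcyclic d V (D - A)"
    using principal_partitionD(3)[OF assms(1,2)] by (simp add: kfold_circuit_def)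
  then have "D - A = \<Union>{C. C \<subseteq> D - A \<and> Rcircuit d V C}" by (simp add: Rcyclic_def)
  then have "e \<in> \<Union>{C. C \<subseteq> D - A \<and> Rcircuit d V C}"
    using assms(3) by (rule subst[where P = "\<lambda>S. e \<in> S"])
  then show ?thesis by blast
qed

lemma principal_partition_Rrank_Diff:
  assumes pp: "principal_partition d V D P" and finD: "finite D"
    and A: "A \<in> P" "e \<in> A" "f \<in> A" "e \<noteq> f"
  shows "Rrank d V (D - {e, f}) < Rrank d V D"
proof -
  have AD: "A \<subseteq> D" using principal_partitionD(1)[OF pp] A(1) by blast
  have finA: "finite A" using finite_subset[OF AD finD] .
  have "Rrank d V (D - A) + (card D - Rrank d V D - 1) = card D - card A"
    using principal_partitionD(3)[OF pp A(1)] AD finD by (simp add: kfold_circuit_def card_Diff_subset finA)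
  moreover have "D - {e, f} = (D - A) \<union> (A - {e, f})" using AD A by auto
  then have "Rrank d V (D - {e, f}) \<le> Rrank d V (D - A) + card (A - {e, f})"
    using Rrank_Un_le[of "D - A" "A - {e, f}" d V] finD finA by simp
  moreover have "card (A - {e, f}) = card A - 2" "2 \<le> card A"
    using A finA card_mono[OF finA, of "{e, f}"] by (auto simp: card_Diff_subset)
  moreover have "Rrank d V D \<le> card D" "card A \<le> card D"
    using Rrank_le_card[OF finD] card_mono[OF finD AD] by auto
  ultimately show ?thesis by linarith
qed

lemma technicolour_cycle_pair:
  assumes finE: "finite E" and two: "\<forall>e\<in>E. card e = 2"
    and pp: "principal_partition 1 (\<Union>E) E P" and "technicolour P x"
  shows "cycle_pair_at E (\<Union>E) x"
proof -
  obtain B1 B2 e1 e2 where B: "B1 \<in> P" "B2 \<in> P" "B1 \<noteq> B2" "e1 \<in> B1" "x \<in> e1" "e2 \<in> B2" "x \<in> e2"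
    using \<open>technicolour P x\<close> unfolding technicolour_def by blast
  have "e1 \<in> E" "e2 \<in> E" using principal_partitionD(1)[OF pp] B by blast+
  have "e1 \<notin> B2" "e2 \<notin> B1" using principal_partitionD(2)[OF pp B(1-3)] B by blast+
  have edges: "\<forall>e\<in>Z. \<exists>a b. a \<in> \<Union>E \<and> b \<in> \<Union>E \<and> a \<noteq> b \<and> e = {a, b}" if "Z \<subseteq> E" for Z
    using edges_of_card_2[OF two] that by blast
  have finV: "finite (\<Union>E)" by (rule finite_Union_of_card_2[OF finE two])
  obtain Z1 where Z1: "Rcircuit 1 (\<Union>E) Z1" "Z1 \<subseteq> E - B2" "e1 \<in> Z1"
    using principal_partition_circuit_avoiding[OF pp B(2), of e1] \<open>e1 \<in> E\<close> \<open>e1 \<notin> B2\<close> by blast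
  obtain Z2 where Z2: "Rcircuit 1 (\<Union>E) Z2" "Z2 \<subseteq> E - B1" "e2 \<in> Z2"
    using principal_partition_circuit_avoiding[OF pp B(1), of e2] \<open>e2 \<in> E\<close> \<open>e2 \<notin> B1\<close> by blast
  obtain cs1 where cs1: "is_cycle cs1" "set cs1 \<subseteq> \<Union>E" "cyc_edges cs1 = Z1"
    by (rule R1_circuit_is_cycle[OF finV edges Z1(1)]) (use Z1(2) in blast)
  obtain cs2 where cs2: "is_cycle cs2" "set cs2 \<subseteq> \<Union>E" "cyc_edges cs2 = Z2"
    by (rule R1_circuit_is_cycle[OF finV edges Z2(1)]) (use Z2(2) in blast)
  obtain a c where "e2 = {a, c}" using two \<open>e2 \<in> E\<close> by (auto simp: card_2_iff)
  then have "e2 = {x, if a = x then c else a}" using B(7) by auto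
  moreover have "x \<in> set cs1" using cyc_edges_vertex[OF cs1(1)] cs1(3) Z1(3) B(5) by blast
  moreover have "e2 \<notin> Z1" using Z1(2) B(6) by blast
  ultimately show ?thesis
    unfolding cycle_pair_at_def using cs1 cs2 Z1(2) Z2(2,3)
    by (intro exI[of _ cs1] exI[of _ cs2] exI[of _ "if a = x then c else a"]) auto
qed

theorem lemma4p6:
  fixes E :: "'a set set" and k :: nat and P Q :: "'a set set set" and x y v :: 'a
  assumes "finite E" and "\<forall>e\<in>E. card e = 2"
    and "k \<ge> 1"
    and "kfold_circuit 1 (\<Union> E) E k"
    and "principal_partition 1 (\<Union> E) E P"
    and "x \<noteq> y" and "technicolour P x" and "technicolour P y"
    and "v \<notin> \<Union> E"
    and "principal_partition 2 (insert v (\<Union> E)) (cone_edges E v) Q"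
  shows "\<not> (\<exists>A\<in>Q. {v, x} \<in> A \<and> {v, y} \<in> A)"
proof
  assume "\<exists>A\<in>Q. {v, x} \<in> A \<and> {v, y} \<in> A"
  then obtain A where A: "A \<in> Q" "{v, x} \<in> A" "{v, y} \<in> A" by blast
  have "Rrank 2 (insert v (\<Union>E)) (cone_edges E v)
      \<le> Rrank 2 (insert v (\<Union>E)) (cone_edges E v - {{v, x}, {v, y}})"
    using cone_Rrank_without_spokes[OF assms(1,2,9,6)]
      technicolour_cycle_pair[OF assms(1,2,5,7)] technicolour_cycle_pair[OF assms(1,2,5,8)] .
  moreover have "finite (cone_edges E v)" using finite_cone_edges[OF assms(1,2)] .
  then have "Rrank 2 (insert v (\<Union>E)) (cone_edges E v - {{v, x}, {v, y}})
      < Rrank 2 (insert v (\<Union>E)) (cone_edges E v)"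
    using principal_partition_Rrank_Diff[OF assms(10) _ A] assms(6) by (simp add: doubleton_eq_iff)
  ultimately show False by simp
qed

end
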